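(* Let $C(x,y,1;1)=\sum_{\nu\in\mathcal{CP}}x^{v(\nu)}y^{h(\nu)}$, let $z_\pm=\frac{1}{1\pm\sqrt{x}}$, and let $$C^{bu}(x,y,1;z)=\frac{xy(1-yz)}{(1-yz)^2-x},\qquad C^{u}(x,y,1;z)=\frac{xy(z_0-z)+\frac{x^2y^2z(1-z)}{(1-yz)^2-x}-\frac{x^2y^2z_0(1-z_0)}{(1-yz_0)^2-x}}{(1-z)(1-yz)+xz},$$ with $z_0=\frac{1+y-x-\sqrt{(1+y-x)^2-4y}}{2y}$. Then \begin{align*} C(x,y,1;1)&=\frac{2xy}{x-(1-y)^2}C^u(x,y,1;1)-\frac{\sqrt{x}y}{(1+\sqrt{x})(1+\sqrt{x}-y)}C^u(x,y,1;z_+)+\frac{\sqrt{x}y}{(1-\sqrt{x})(1-\sqrt{x}-y)}C^u(x,y,1;z_-)\\ &\quad+\frac{xy^2}{2(1+\sqrt{x})(1+\sqrt{x}-y)^2}C^{bu}(x,y,1;z_+)+\frac{xy^2}{2(1-\sqrt{x})(1-\sqrt{x}-y)^2}C^{bu}(x,y,1;z_-)-\frac{x(1-y)y}{x-(1-y)^2}. \end{align*}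
   Context: A cell is a unit square in the plane whose center is an integer point and whose sides are parallel to the axes. A polyomino is a finite set of cells which is connected under edge-adjacency; polyominoes are considered up to translation. A polyomino is convex if each of its columns and each of its rows is a single contiguous block of cells; $\mathcal{CP}$ is the set of nonempty convex polyominoes up to translation. $v(\nu)$ is the number of columns and $h(\nu)$ the number of rows of $\nu$. (The functions $C^{bu}(x,y,1;z)$ and $C^u(x,y,1;z)$ are the generating functions $\sum x^{v(\nu)}y^{h(\nu)}z^{c(\nu)}$ over the classes of convex polyominoes whose column tops are weakly decreasing and column bottoms weakly increasing from left to right, respectively only whose column tops are weakly decreasing, with $c(\nu)$ the number of cells of the leftmost column minus one; the displayed closed forms are used for the substitutions.) *)

theory Defs
  imports "HOL-Analysis.Analysis"
begin

type_synonym cell = "int \<times> int"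

definition edge_adj :: "cell \<Rightarrow> cell \<Rightarrow> bool" where
  "edge_adj p q \<longleftrightarrow> \<bar>fst p - fst q\<bar> + \<bar>snd p - snd q\<bar> = 1"

definition polyomino :: "cell set \<Rightarrow> bool" where
  "polyomino P \<longleftrightarrow> finite P \<and> P \<noteq> {} \<and>
     (\<forall>p\<in>P. \<forall>q\<in>P. (\<lambda>a b. a \<in> P \<and> b \<in> P \<and> edge_adj a b)\<^sup>*\<^sup>* p q)"

definition convex_polyomino :: "cell set \<Rightarrow> bool" where
  "convex_polyomino P \<longleftrightarrow> polyomino P \<and>
     (\<forall>i j1 j2 j. (i, j1) \<in> P \<longrightarrow> (i, j2) \<in> P \<longrightarrow> j1 \<le> j \<longrightarrow> j \<le> j2 \<longrightarrow> (i, j) \<in> P) \<and>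
     (\<forall>j i1 i2 i. (i1, j) \<in> P \<longrightarrow> (i2, j) \<in> P \<longrightarrow> i1 \<le> i \<longrightarrow> i \<le> i2 \<longrightarrow> (i, j) \<in> P)"

text \<open>Canonical representative of a translation class: leftmost column has x = 0,
  bottom row has y = 0.\<close>
definition normalized :: "cell set \<Rightarrow> bool" where
  "normalized P \<longleftrightarrow> (\<forall>p\<in>P. fst p \<ge> 0 \<and> snd p \<ge> 0) \<and>
     (\<exists>p\<in>P. fst p = 0) \<and> (\<exists>p\<in>P. snd p = 0)"

definition CP :: "cell set set" where
  "CP = {P. convex_polyomino P \<and> normalized P}"

definition ncols :: "cell set \<Rightarrow> nat" where "ncols P = card (fst ` P)"
definition nrows :: "cell set \<Rightarrow> nat" where "nrows P = card (snd ` P)"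

definition Cbu :: "real \<Rightarrow> real \<Rightarrow> real \<Rightarrow> real" where
  "Cbu x y z = x * y * (1 - y * z) / ((1 - y * z)^2 - x)"

definition z0 :: "real \<Rightarrow> real \<Rightarrow> real" where
  "z0 x y = (1 + y - x - sqrt ((1 + y - x)^2 - 4 * y)) / (2 * y)"

definition Cu :: "real \<Rightarrow> real \<Rightarrow> real \<Rightarrow> real" where
  "Cu x y z = (x * y * (z0 x y - z)
      + x^2 * y^2 * z * (1 - z) / ((1 - y * z)^2 - x)
      - x^2 * y^2 * z0 x y * (1 - z0 x y) / ((1 - y * z0 x y)^2 - x))
    / ((1 - z) * (1 - y * z) + x * z)"

end

theory Submission
  imports Defs
begin

(* A convex polyomino is read column by column, from left to right. Removing its leftmost
   column leaves a convex polyomino, and which new left columns are allowed depends only on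
   the first column of the rest and on whether its tops decrease and its bottoms increase
   (the classes C^u and C^bu and the mirror image of C^u). Marking the size of the leftmost
   column by z turns this into linear functional equations for the four generating functions.
   The one for C^bu is solved directly, the one for C^u by the kernel method at the root z0
   of (1 - z)(1 - y z) + x z. In the one for C the kernel (1 - z)^2 - x z^2 vanishes at
   z = 1 / (1 + sqrt x) and z = 1 / (1 - sqrt x); this gives two linear equations for C(1) and
   for the series weighted by the size of the first column, and eliminating the latter yields
   the formula. Everything converges because all series are dominated by the one at z = 4,
   whose part with m + 1 columns is bounded by a multiple of (3 x)^m. *)

section \<open>Convex polyominoes as lists of columns\<close>

text \<open>A column is the interval of rows \<open>fst c .. snd c\<close> it occupies; a polyomino with \<open>n\<close>
  columns is read as the list of its columns from left to right.\<close>

type_synonym column = "int \<times> int"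

definition cols_nonempty :: "column list \<Rightarrow> bool" where
  "cols_nonempty L \<longleftrightarrow> (\<forall>c\<in>set L. fst c \<le> snd c)"

definition cols_overlap :: "column list \<Rightarrow> bool" where
  "cols_overlap L \<longleftrightarrow>
     (\<forall>i. Suc i < length L \<longrightarrow> fst (L!Suc i) \<le> snd (L!i) \<and> fst (L!i) \<le> snd (L!Suc i))"

text \<open>Row convexity of the polyomino, expressed through its columns.\<close>

definition tops_no_dip :: "column list \<Rightarrow> bool" where
  "tops_no_dip L \<longleftrightarrow> (\<forall>a i c. a < i \<longrightarrow> i < c \<longrightarrow> c < length L \<longrightarrow>
      \<not> (snd (L!i) < snd (L!a) \<and> snd (L!i) < snd (L!c)))"

definition bottoms_no_peak :: "column list \<Rightarrow> bool" where
  "bottoms_no_peak L \<longleftrightarrow> (\<forall>a i c. a < i \<longrightarrow> i < c \<longrightarrow> c < length L \<longrightarrow>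
      \<not> (fst (L!a) < fst (L!i) \<and> fst (L!c) < fst (L!i)))"

definition convex_cols :: "column list \<Rightarrow> bool" where
  "convex_cols L \<longleftrightarrow>
     L \<noteq> [] \<and> cols_nonempty L \<and> cols_overlap L \<and> tops_no_dip L \<and> bottoms_no_peak L"

definition tops_decr :: "column list \<Rightarrow> bool" where
  "tops_decr L \<longleftrightarrow> sorted_wrt (\<ge>) (map snd L)"

definition bottoms_incr :: "column list \<Rightarrow> bool" where
  "bottoms_incr L \<longleftrightarrow> sorted (map fst L)"

lemma tops_decr_iff_nth: "tops_decr L \<longleftrightarrow> (\<forall>i. Suc i < length L \<longrightarrow> snd (L!Suc i) \<le> snd (L!i))"
  unfolding tops_decr_def by (subst sorted_wrt_iff_nth_Suc_transp) (auto simp: transp_def)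

lemma tops_decr_nth_mono: "tops_decr L \<Longrightarrow> i \<le> j \<Longrightarrow> j < length L \<Longrightarrow> snd (L!j) \<le> snd (L!i)"
  unfolding tops_decr_def using sorted_wrt_nth_less[of "(\<ge>)" "map snd L" i j]
  by (cases "i = j") auto

lemma tops_decr_Cons: "L \<noteq> [] \<Longrightarrow> tops_decr (c # L) \<longleftrightarrow> snd (hd L) \<le> snd c \<and> tops_decr L"
  by (cases L) (auto simp: tops_decr_def sorted_wrt2 transp_def)

lemma bottoms_incr_Cons: "L \<noteq> [] \<Longrightarrow> bottoms_incr (c # L) \<longleftrightarrow> fst c \<le> fst (hd L) \<and> bottoms_incr L"
  by (cases L) (auto simp: bottoms_incr_def)

lemma cols_overlap_Cons:
  "cols_overlap (c # L) \<longleftrightarrow> (L \<noteq> [] \<longrightarrow> fst (hd L) \<le> snd c \<and> fst c \<le> snd (hd L)) \<and> cols_overlap L"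
  unfolding cols_overlap_def by (cases L) (auto simp: nth_Cons split: nat.splits)

lemma tops_no_dip_Cons: "tops_no_dip (c # L) \<longleftrightarrow> tops_no_dip L \<and>
   (\<forall>i k. i < k \<longrightarrow> k < length L \<longrightarrow> \<not> (snd (L!i) < snd c \<and> snd (L!i) < snd (L!k)))"
proof
  assume h: "tops_no_dip (c # L)"
  have "tops_no_dip L" unfolding tops_no_dip_def
  proof (intro allI impI)
    fix a i k assume "a < i" "i < k" "k < length L"
    then show "\<not> (snd (L!i) < snd (L!a) \<and> snd (L!i) < snd (L!k))"
      using h unfolding tops_no_dip_def by (metis Suc_less_eq length_Cons nth_Cons_Suc)
  qed
  moreover have "\<forall>i k. i < k \<longrightarrow> k < length L \<longrightarrow> \<not> (snd (L!i) < snd c \<and> snd (L!i) < snd (L!k))"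
  proof (intro allI impI)
    fix i k assume "i < k" "k < length L"
    then show "\<not> (snd (L!i) < snd c \<and> snd (L!i) < snd (L!k))"
      using h unfolding tops_no_dip_def
      by (metis Suc_less_eq length_Cons nth_Cons_0 nth_Cons_Suc zero_less_Suc)
  qed
  ultimately show "tops_no_dip L \<and> (\<forall>i k. i < k \<longrightarrow> k < length L \<longrightarrow> \<not> (snd (L!i) < snd c \<and> snd (L!i) < snd (L!k)))"
    by blast
next
  assume h: "tops_no_dip L \<and> (\<forall>i k. i < k \<longrightarrow> k < length L \<longrightarrow> \<not> (snd (L!i) < snd c \<and> snd (L!i) < snd (L!k)))"
  show "tops_no_dip (c # L)" unfolding tops_no_dip_def
  proof (intro allI impI)
    fix a i k assume a: "a < i" "i < k" "k < length (c # L)"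
    then obtain i' k' where ik: "i = Suc i'" "k = Suc k'" by (metis Suc_pred' gr_implies_not0 not_gr_zero)
    show "\<not> (snd ((c # L)!i) < snd ((c # L)!a) \<and> snd ((c # L)!i) < snd ((c # L)!k))"
    proof (cases a)
      case 0 then show ?thesis using h a ik by auto
    next
      case (Suc a') then show ?thesis using h a ik unfolding tops_no_dip_def by auto
    qed
  qed
qed

text \<open>A new column higher than its neighbour creates a dip unless the tops to its right decrease:
  an ascent forms a dip with the new column or with the first column.\<close>

lemma tops_no_dip_Cons_iff:
  assumes "L \<noteq> []"
  shows "tops_no_dip (c # L) \<longleftrightarrow> tops_no_dip L \<and> (snd (hd L) < snd c \<longrightarrow> tops_decr L)"
proof -
  have hd: "hd L = L!0" using assms by (simp add: hd_conv_nth)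
  have "(\<forall>i k. i < k \<longrightarrow> k < length L \<longrightarrow> \<not> (snd (L!i) < snd c \<and> snd (L!i) < snd (L!k)))
      \<longleftrightarrow> (snd (L!0) < snd c \<longrightarrow> tops_decr L)" if nd: "tops_no_dip L"
  proof
    assume h: "\<forall>i k. i < k \<longrightarrow> k < length L \<longrightarrow> \<not> (snd (L!i) < snd c \<and> snd (L!i) < snd (L!k))"
    show "snd (L!0) < snd c \<longrightarrow> tops_decr L"
      unfolding tops_decr_iff_nth
    proof (intro impI allI, rule ccontr)
      fix i assume i: "snd (L!0) < snd c" "Suc i < length L" "\<not> snd (L!Suc i) \<le> snd (L!i)"
      have "\<not> (snd (L!i) < snd c \<and> snd (L!i) < snd (L!Suc i))"
        using h[rule_format, of i "Suc i"] i(2) by simp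
      moreover have "\<not> (snd (L!0) < snd c \<and> snd (L!0) < snd (L!Suc i))"
        using h[rule_format, of 0 "Suc i"] i(2) by simp
      ultimately show False using i by linarith
    qed
  next
    assume h: "snd (L!0) < snd c \<longrightarrow> tops_decr L"
    show "\<forall>i k. i < k \<longrightarrow> k < length L \<longrightarrow> \<not> (snd (L!i) < snd c \<and> snd (L!i) < snd (L!k))"
    proof (intro allI impI notI)
      fix i k assume ik: "i < k" "k < length L" "snd (L!i) < snd c \<and> snd (L!i) < snd (L!k)"
      show False
      proof (cases "snd (L!0) < snd c")
        case True
        then have "snd (L!k) \<le> snd (L!i)" using h ik(1,2) tops_decr_nth_mono[of L i k] by simp
        then show False using ik(3) by simp
      next
        case False
        then have "0 < i" using ik by (cases i) auto
        then have "\<not> (snd (L!i) < snd (L!0) \<and> snd (L!i) < snd (L!k))"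
          using nd ik(1,2) unfolding tops_no_dip_def by blast
        then show False using ik False by linarith
      qed
    qed
  qed
  then show ?thesis unfolding tops_no_dip_Cons[of c L] hd by blast
qed

lemma convex_cols_single: "convex_cols [c] \<longleftrightarrow> fst c \<le> snd c"
  unfolding convex_cols_def cols_nonempty_def cols_overlap_def tops_no_dip_def bottoms_no_peak_def
  by auto

lemma convex_cols_nonempty: "convex_cols L \<Longrightarrow> c \<in> set L \<Longrightarrow> fst c \<le> snd c"
  unfolding convex_cols_def cols_nonempty_def by blast

definition reflect_cols :: "column list \<Rightarrow> column list" where
  "reflect_cols L = map (\<lambda>(b, t). (- t, - b)) L"

lemma length_reflect_cols[simp]: "length (reflect_cols L) = length L"
  by (simp add: reflect_cols_def)

lemma nth_reflect_cols[simp]: "i < length L \<Longrightarrow> reflect_cols L ! i = (- snd (L!i), - fst (L!i))"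
  by (simp add: reflect_cols_def case_prod_beta)

lemma reflect_cols_Cons[simp]: "reflect_cols (c # L) = (- snd c, - fst c) # reflect_cols L"
  by (simp add: reflect_cols_def case_prod_beta)

lemma reflect_cols_Nil[simp]: "reflect_cols [] = []"
  by (simp add: reflect_cols_def)

lemma reflect_cols_eq_Nil[simp]: "reflect_cols L = [] \<longleftrightarrow> L = []"
  by (simp add: reflect_cols_def)

lemma hd_reflect_cols: "L \<noteq> [] \<Longrightarrow> hd (reflect_cols L) = (- snd (hd L), - fst (hd L))"
  by (cases L) auto

lemma reflect_reflect_cols[simp]: "reflect_cols (reflect_cols L) = L"
  by (induction L) auto

lemma tops_no_dip_reflect_cols[simp]: "tops_no_dip (reflect_cols L) \<longleftrightarrow> bottoms_no_peak L"
  unfolding tops_no_dip_def bottoms_no_peak_def by auto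

lemma bottoms_no_peak_reflect_cols[simp]: "bottoms_no_peak (reflect_cols L) \<longleftrightarrow> tops_no_dip L"
  unfolding tops_no_dip_def bottoms_no_peak_def by auto

lemma cols_nonempty_reflect_cols[simp]: "cols_nonempty (reflect_cols L) \<longleftrightarrow> cols_nonempty L"
  unfolding cols_nonempty_def reflect_cols_def by auto

lemma cols_overlap_reflect_cols[simp]: "cols_overlap (reflect_cols L) \<longleftrightarrow> cols_overlap L"
  unfolding cols_overlap_def by auto

lemma convex_cols_reflect_cols[simp]: "convex_cols (reflect_cols L) \<longleftrightarrow> convex_cols L"
  unfolding convex_cols_def by auto

lemma tops_decr_reflect_cols[simp]: "tops_decr (reflect_cols L) \<longleftrightarrow> bottoms_incr L"
  unfolding tops_decr_def bottoms_incr_def reflect_cols_def by (simp add: sorted_wrt_map case_prod_beta)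

lemma bottoms_incr_reflect_cols[simp]: "bottoms_incr (reflect_cols L) \<longleftrightarrow> tops_decr L"
  unfolding tops_decr_def bottoms_incr_def reflect_cols_def by (simp add: sorted_wrt_map case_prod_beta)

lemma bottoms_no_peak_Cons_iff:
  assumes "L \<noteq> []"
  shows "bottoms_no_peak (c # L) \<longleftrightarrow> bottoms_no_peak L \<and> (fst c < fst (hd L) \<longrightarrow> bottoms_incr L)"
proof -
  have "bottoms_no_peak (c # L) \<longleftrightarrow> tops_no_dip ((- snd c, - fst c) # reflect_cols L)"
    using tops_no_dip_reflect_cols[of "c # L"] by (simp only: reflect_cols_Cons)
  also have "\<dots> \<longleftrightarrow> tops_no_dip (reflect_cols L)
      \<and> (snd (hd (reflect_cols L)) < snd (- snd c, - fst c) \<longrightarrow> tops_decr (reflect_cols L))"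
    by (rule tops_no_dip_Cons_iff) (simp add: assms)
  also have "\<dots> \<longleftrightarrow> bottoms_no_peak L \<and> (fst c < fst (hd L) \<longrightarrow> bottoms_incr L)"
    using assms by (simp add: hd_reflect_cols)
  finally show ?thesis .
qed

lemma convex_cols_Cons:
  assumes "L \<noteq> []"
  shows "convex_cols (c # L) \<longleftrightarrow> convex_cols L \<and> fst c \<le> snd c \<and> fst (hd L) \<le> snd c
     \<and> fst c \<le> snd (hd L) \<and> (snd (hd L) < snd c \<longrightarrow> tops_decr L) \<and> (fst c < fst (hd L) \<longrightarrow> bottoms_incr L)"
  using assms tops_no_dip_Cons_iff[OF assms] bottoms_no_peak_Cons_iff[OF assms]
  unfolding convex_cols_def cols_nonempty_def cols_overlap_Cons by auto

definition shift_cols :: "int \<Rightarrow> column list \<Rightarrow> column list" where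
  "shift_cols d L = map (\<lambda>(b, t). (b + d, t + d)) L"

fun min_bottom :: "column list \<Rightarrow> int" where
  "min_bottom [] = 0"
| "min_bottom [c] = fst c"
| "min_bottom (c # L) = min (fst c) (min_bottom L)"

fun max_top :: "column list \<Rightarrow> int" where
  "max_top [] = 0"
| "max_top [c] = snd c"
| "max_top (c # L) = max (snd c) (max_top L)"

definition cols_height :: "column list \<Rightarrow> nat" where
  "cols_height L = nat (max_top L - min_bottom L + 1)"

definition first_col_size :: "column list \<Rightarrow> nat" where
  "first_col_size L = nat (snd (hd L) - fst (hd L) + 1)"

text \<open>Column lists are normalised by letting their first column start at row \<open>0\<close>, not their lowest
  row as in \<open>CP\<close>: the recursion is on the first column.\<close>

definition anchored :: "column list \<Rightarrow> bool" where
  "anchored L \<longleftrightarrow> L \<noteq> [] \<and> fst (hd L) = 0"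

lemma min_bottom_Cons: "L \<noteq> [] \<Longrightarrow> min_bottom (c # L) = min (fst c) (min_bottom L)"
  by (cases L) auto

lemma max_top_Cons: "L \<noteq> [] \<Longrightarrow> max_top (c # L) = max (snd c) (max_top L)"
  by (cases L) auto

lemma min_bottom_le: "c \<in> set L \<Longrightarrow> min_bottom L \<le> fst c"
  by (induction L rule: min_bottom.induct) auto

lemma max_top_ge: "c \<in> set L \<Longrightarrow> snd c \<le> max_top L"
  by (induction L rule: max_top.induct) auto

lemma min_bottom_in: "L \<noteq> [] \<Longrightarrow> \<exists>c\<in>set L. min_bottom L = fst c"
  by (induction L rule: min_bottom.induct) (auto simp: min_def)

lemma length_shift_cols[simp]: "length (shift_cols d L) = length L"
  by (simp add: shift_cols_def)

lemma nth_shift_cols[simp]: "i < length L \<Longrightarrow> shift_cols d L ! i = (fst (L!i) + d, snd (L!i) + d)"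
  by (simp add: shift_cols_def case_prod_beta)

lemma shift_cols_Cons[simp]: "shift_cols d (c # L) = (fst c + d, snd c + d) # shift_cols d L"
  by (simp add: shift_cols_def case_prod_beta)

lemma shift_cols_Nil[simp]: "shift_cols d [] = []"
  by (simp add: shift_cols_def)

lemma shift_shift_cols[simp]: "shift_cols d (shift_cols e L) = shift_cols (d + e) L"
  by (induction L) auto

lemma shift_cols_0[simp]: "shift_cols 0 L = L"
  by (induction L) auto

lemma shift_cols_eq_Nil[simp]: "shift_cols d L = [] \<longleftrightarrow> L = []"
  by (simp add: shift_cols_def)

lemma hd_shift_cols: "L \<noteq> [] \<Longrightarrow> hd (shift_cols d L) = (fst (hd L) + d, snd (hd L) + d)"
  by (cases L) auto

lemma min_bottom_shift_cols[simp]: "L \<noteq> [] \<Longrightarrow> min_bottom (shift_cols d L) = min_bottom L + d"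
  by (induction L rule: min_bottom.induct) auto

lemma max_top_shift_cols[simp]: "L \<noteq> [] \<Longrightarrow> max_top (shift_cols d L) = max_top L + d"
  by (induction L rule: max_top.induct) auto

lemma cols_height_shift_cols[simp]: "L \<noteq> [] \<Longrightarrow> cols_height (shift_cols d L) = cols_height L"
  by (simp add: cols_height_def)

lemma first_col_size_shift_cols[simp]: "L \<noteq> [] \<Longrightarrow> first_col_size (shift_cols d L) = first_col_size L"
  by (simp add: first_col_size_def hd_shift_cols)

lemma cols_nonempty_shift_cols[simp]: "cols_nonempty (shift_cols d L) \<longleftrightarrow> cols_nonempty L"
  unfolding cols_nonempty_def shift_cols_def by auto

lemma cols_overlap_shift_cols[simp]: "cols_overlap (shift_cols d L) \<longleftrightarrow> cols_overlap L"
  unfolding cols_overlap_def by auto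

lemma tops_no_dip_shift_cols[simp]: "tops_no_dip (shift_cols d L) \<longleftrightarrow> tops_no_dip L"
  unfolding tops_no_dip_def by auto

lemma bottoms_no_peak_shift_cols[simp]: "bottoms_no_peak (shift_cols d L) \<longleftrightarrow> bottoms_no_peak L"
  unfolding bottoms_no_peak_def by auto

lemma convex_cols_shift_cols[simp]: "convex_cols (shift_cols d L) \<longleftrightarrow> convex_cols L"
  unfolding convex_cols_def by auto

lemma tops_decr_shift_cols[simp]: "tops_decr (shift_cols d L) \<longleftrightarrow> tops_decr L"
  unfolding tops_decr_def shift_cols_def by (simp add: sorted_wrt_map case_prod_beta)

lemma bottoms_incr_shift_cols[simp]: "bottoms_incr (shift_cols d L) \<longleftrightarrow> bottoms_incr L"
  unfolding bottoms_incr_def shift_cols_def by (simp add: sorted_wrt_map case_prod_beta)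

lemma tops_decr_max_top: "tops_decr L \<Longrightarrow> L \<noteq> [] \<Longrightarrow> max_top L = snd (hd L)"
proof (induction L rule: max_top.induct)
  case (3 c d L)
  then have "tops_decr (d # L)" "snd d \<le> snd c" using tops_decr_Cons[of "d # L" c] by auto
  then show ?case using 3 by auto
qed auto

lemma bottoms_incr_min_bottom: "bottoms_incr L \<Longrightarrow> L \<noteq> [] \<Longrightarrow> min_bottom L = fst (hd L)"
proof (induction L rule: min_bottom.induct)
  case (3 c d L)
  then have "bottoms_incr (d # L)" "fst c \<le> fst d" using bottoms_incr_Cons[of "d # L" c] by auto
  then show ?case using 3 by auto
qed auto

lemma min_bottom_le_hd: "L \<noteq> [] \<Longrightarrow> min_bottom L \<le> fst (hd L)"
  by (rule min_bottom_le) simp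

lemma max_top_ge_hd: "L \<noteq> [] \<Longrightarrow> snd (hd L) \<le> max_top L"
  by (rule max_top_ge) simp

lemma cols_height_Cons:
  assumes "R \<noteq> []" "convex_cols R" "fst c \<le> snd c"
    and "snd (hd R) < snd c \<Longrightarrow> max_top R = snd (hd R)"
    and "fst c < fst (hd R) \<Longrightarrow> min_bottom R = fst (hd R)"
  shows "cols_height (c # R) = cols_height R + nat (snd c - snd (hd R)) + nat (fst (hd R) - fst c)"
proof -
  have "fst (hd R) \<le> snd (hd R)" using assms(1,2) convex_cols_nonempty by simp
  then have hR: "min_bottom R \<le> max_top R"
    using min_bottom_le_hd[OF assms(1)] max_top_ge_hd[OF assms(1)] by linarith
  have T: "max_top (c # R) = max_top R + int (nat (snd c - snd (hd R)))"
  proof (cases "snd c \<le> snd (hd R)")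
    case True then show ?thesis using max_top_ge_hd[OF assms(1)] by (simp add: max_top_Cons[OF assms(1)])
  next
    case False then show ?thesis using assms(4) by (simp add: max_top_Cons[OF assms(1)])
  qed
  have B: "min_bottom (c # R) = min_bottom R - int (nat (fst (hd R) - fst c))"
  proof (cases "fst (hd R) \<le> fst c")
    case True then show ?thesis using min_bottom_le_hd[OF assms(1)] by (simp add: min_bottom_Cons[OF assms(1)])
  next
    case False then show ?thesis using assms(5) by (simp add: min_bottom_Cons[OF assms(1)])
  qed
  have e: "max_top (c # R) - min_bottom (c # R) + 1 = (max_top R - min_bottom R + 1)
      + int (nat (snd c - snd (hd R))) + int (nat (fst (hd R) - fst c))"
    unfolding T B by simp
  show ?thesis unfolding cols_height_def e using hR by (simp add: nat_add_distrib)
qed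

lemma min_bottom_reflect_cols: "min_bottom (reflect_cols L) = - max_top L"
  by (induction L rule: max_top.induct) auto

lemma max_top_reflect_cols: "max_top (reflect_cols L) = - min_bottom L"
  by (induction L rule: min_bottom.induct) auto

lemma cols_height_reflect_cols[simp]: "cols_height (reflect_cols L) = cols_height L"
  unfolding cols_height_def min_bottom_reflect_cols max_top_reflect_cols by simp

lemma first_col_size_reflect_cols[simp]: "L \<noteq> [] \<Longrightarrow> first_col_size (reflect_cols L) = first_col_size L"
  by (cases L) (auto simp: first_col_size_def)

lemma reflect_shift_cols: "reflect_cols (shift_cols d L) = shift_cols (- d) (reflect_cols L)"
  by (induction L) auto

text \<open>Reflecting an anchored list maps its first column \<open>(0, t)\<close> to \<open>(- t, 0)\<close>; shifting by
  \<open>t\<close> anchors it again.\<close>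

definition flip_cols :: "column list \<Rightarrow> column list" where
  "flip_cols L = shift_cols (snd (hd L)) (reflect_cols L)"

lemma flip_cols_props:
  assumes "anchored L"
  shows "anchored (flip_cols L)" "flip_cols (flip_cols L) = L"
    "convex_cols (flip_cols L) \<longleftrightarrow> convex_cols L"
    "tops_decr (flip_cols L) \<longleftrightarrow> bottoms_incr L" "bottoms_incr (flip_cols L) \<longleftrightarrow> tops_decr L"
    "cols_height (flip_cols L) = cols_height L" "first_col_size (flip_cols L) = first_col_size L"
    "length (flip_cols L) = length L"
proof -
  obtain t L' where L: "L = (0, t) # L'" using assms unfolding anchored_def by (cases L) auto
  show "anchored (flip_cols L)" "convex_cols (flip_cols L) \<longleftrightarrow> convex_cols L"
    "tops_decr (flip_cols L) \<longleftrightarrow> bottoms_incr L" "bottoms_incr (flip_cols L) \<longleftrightarrow> tops_decr L"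
    "cols_height (flip_cols L) = cols_height L" "first_col_size (flip_cols L) = first_col_size L"
    "length (flip_cols L) = length L"
    unfolding flip_cols_def L anchored_def
    by (simp_all del: shift_cols_Cons reflect_cols_Cons) (simp_all add: hd_shift_cols)
  show "flip_cols (flip_cols L) = L" unfolding flip_cols_def L by (simp add: reflect_shift_cols)
qed

text \<open>\<open>Conv_u\<close> and \<open>Conv_bu\<close> are the classes \<open>C\<^sup>u\<close> and \<open>C\<^sup>b\<^sup>u\<close>; \<open>Conv_d\<close> is the mirror image
  of \<open>Conv_u\<close>.\<close>

definition Conv :: "column list set" where
  "Conv = {L. convex_cols L \<and> anchored L}"

definition Conv_u :: "column list set" where
  "Conv_u = {L. convex_cols L \<and> anchored L \<and> tops_decr L}"

definition Conv_d :: "column list set" where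
  "Conv_d = {L. convex_cols L \<and> anchored L \<and> bottoms_incr L}"

definition Conv_bu :: "column list set" where
  "Conv_bu = {L. convex_cols L \<and> anchored L \<and> tops_decr L \<and> bottoms_incr L}"

lemma Conv_subsets: "Conv_u \<subseteq> Conv" "Conv_d \<subseteq> Conv" "Conv_bu \<subseteq> Conv" "Conv_bu \<subseteq> Conv_u"
  "Conv_bu \<subseteq> Conv_d"
  unfolding Conv_def Conv_u_def Conv_d_def Conv_bu_def by auto

lemma flip_cols_Conv_u: "L \<in> Conv_u \<Longrightarrow> flip_cols L \<in> Conv_d" "L \<in> Conv_d \<Longrightarrow> flip_cols L \<in> Conv_u"
  unfolding Conv_u_def Conv_d_def using flip_cols_props by auto

definition first_top :: "column list \<Rightarrow> int" where
  "first_top R = snd (hd R)"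

lemma first_top_nonneg: "R \<in> Conv \<Longrightarrow> 0 \<le> first_top R"
  unfolding Conv_def first_top_def anchored_def using convex_cols_nonempty[of R "hd R"] by auto

lemma first_col_size_Conv: "R \<in> Conv \<Longrightarrow> first_col_size R = nat (first_top R) + 1"
  unfolding Conv_def first_top_def anchored_def first_col_size_def
  using convex_cols_nonempty[of R "hd R"] by auto

text \<open>The new column \<open>p\<close> is given in the coordinates of \<open>R\<close>, whose first column starts at row
  \<open>0\<close>; the result is anchored again.\<close>

definition prepend_col :: "column list \<Rightarrow> column \<Rightarrow> column list" where
  "prepend_col R p = (0, snd p - fst p) # shift_cols (- fst p) R"

lemma prepend_col_eq_shift: "prepend_col R p = shift_cols (- fst p) (p # R)"
  unfolding prepend_col_def by simp

lemma length_prepend_col[simp]: "length (prepend_col R p) = Suc (length R)"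
  by (simp add: prepend_col_def)

lemma anchored_prepend_col: "anchored (prepend_col R p)"
  by (simp add: prepend_col_def anchored_def)

lemma first_col_size_prepend_col: "first_col_size (prepend_col R p) = nat (snd p - fst p + 1)"
  by (simp add: prepend_col_def first_col_size_def)

lemma convex_cols_prepend_col:
  assumes "anchored R"
  shows "convex_cols (prepend_col R p) \<longleftrightarrow> convex_cols R \<and> fst p \<le> snd p \<and> 0 \<le> snd p
    \<and> fst p \<le> first_top R \<and> (first_top R < snd p \<longrightarrow> tops_decr R) \<and> (fst p < 0 \<longrightarrow> bottoms_incr R)"
proof -
  have R: "R \<noteq> []" "fst (hd R) = 0" using assms unfolding anchored_def by auto
  show ?thesis unfolding prepend_col_eq_shift convex_cols_shift_cols first_top_def
    using convex_cols_Cons[OF R(1), of p] R by auto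
qed

lemma tops_decr_prepend_col:
  "anchored R \<Longrightarrow> tops_decr (prepend_col R p) \<longleftrightarrow> first_top R \<le> snd p \<and> tops_decr R"
  unfolding prepend_col_eq_shift tops_decr_shift_cols first_top_def anchored_def
  using tops_decr_Cons by simp

lemma bottoms_incr_prepend_col:
  "anchored R \<Longrightarrow> bottoms_incr (prepend_col R p) \<longleftrightarrow> fst p \<le> 0 \<and> bottoms_incr R"
  unfolding prepend_col_eq_shift bottoms_incr_shift_cols anchored_def
  using bottoms_incr_Cons by simp

lemma prepend_col_inj:
  assumes "anchored R1" "anchored R2" "prepend_col R1 p1 = prepend_col R2 p2"
  shows "R1 = R2 \<and> p1 = p2"
proof -
  have h: "snd p1 - fst p1 = snd p2 - fst p2" "shift_cols (- fst p1) R1 = shift_cols (- fst p2) R2"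
    using assms(3) unfolding prepend_col_def by auto
  have "fst (hd (shift_cols (- fst p1) R1)) = fst (hd (shift_cols (- fst p2) R2))" using h by simp
  then have f: "fst p1 = fst p2" using assms(1,2) unfolding anchored_def by (simp add: hd_shift_cols)
  then have "R1 = R2" using h(2) by (metis add.right_neutral add.right_inverse shift_cols_0 shift_shift_cols)
  then show ?thesis using f h(1) by (simp add: prod_eq_iff)
qed

lemma obtain_prepend_col:
  assumes "anchored L" "2 \<le> length L"
  obtains R p where "anchored R" "L = prepend_col R p"
proof -
  obtain c d L' where L: "L = c # d # L'" "fst c = 0"
    using assms unfolding anchored_def by (cases L; cases "tl L") auto
  let ?R = "shift_cols (- fst d) (d # L')" and ?p = "(- fst d, snd c - fst d)"
  have "anchored ?R" by (simp add: anchored_def)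
  moreover have "L = prepend_col ?R ?p" using L by (cases c) (simp add: prepend_col_def)
  ultimately show ?thesis by (rule that)
qed

lemma image_prepend_col:
  assumes X: "X \<subseteq> Collect anchored"
    and T: "\<And>R p. (R, p) \<in> T \<Longrightarrow> anchored R"
    and iff: "\<And>R p. anchored R \<Longrightarrow> prepend_col R p \<in> X \<longleftrightarrow> (R, p) \<in> T"
  shows "{L \<in> X. 2 \<le> length L} = case_prod prepend_col ` T"
proof (intro set_eqI iffI)
  fix L assume L: "L \<in> {L \<in> X. 2 \<le> length L}"
  then have "anchored L" "2 \<le> length L" using X by auto
  then obtain R p where Rp: "anchored R" "L = prepend_col R p" by (rule obtain_prepend_col)
  moreover have "(R, p) \<in> T" using iff[OF Rp(1)] L Rp(2) by simp
  ultimately show "L \<in> case_prod prepend_col ` T" by (intro image_eqI[of _ _ "(R, p)"]) simp_all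
next
  fix L assume "L \<in> case_prod prepend_col ` T"
  then obtain R p where Rp: "(R, p) \<in> T" "L = prepend_col R p" by auto
  then have "R \<noteq> []" using T unfolding anchored_def by blast
  then show "L \<in> {L \<in> X. 2 \<le> length L}" using Rp T iff by (cases R) auto
qed

text \<open>A new column \<open>p\<close> on the left of \<open>R\<close>, whose first column is \<open>(0, t)\<close>, lies within rows
  \<open>0..t\<close>, or reaches below row \<open>0\<close> (then the bottoms of \<open>R\<close> must increase), or above row \<open>t\<close>
  (then the tops of \<open>R\<close> must decrease), or both.\<close>

definition cols_within :: "int \<Rightarrow> column set" where
  "cols_within t = {p. 0 \<le> fst p \<and> fst p \<le> snd p \<and> snd p \<le> t}"

definition ext_C :: "column list set \<Rightarrow> column list set \<Rightarrow> column list set \<Rightarrow> column list set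
    \<Rightarrow> (column list \<times> column) set" where
  "ext_C A D U B =
     Sigma A (\<lambda>R. cols_within (first_top R)) \<union> Sigma D (\<lambda>R. {..<0} \<times> {0..first_top R})
     \<union> Sigma U (\<lambda>R. {0..first_top R} \<times> {first_top R<..}) \<union> Sigma B (\<lambda>R. {..<0} \<times> {first_top R<..})"

definition ext_U :: "column list set \<Rightarrow> column list set \<Rightarrow> (column list \<times> column) set" where
  "ext_U U B = Sigma U (\<lambda>R. {0..first_top R} \<times> {first_top R..}) \<union> Sigma B (\<lambda>R. {..<0} \<times> {first_top R..})"

definition ext_BU :: "column list set \<Rightarrow> (column list \<times> column) set" where
  "ext_BU B = Sigma B (\<lambda>R. {..0} \<times> {first_top R..})"

lemma Conv_prepend_col: "{L \<in> Conv. 2 \<le> length L} = case_prod prepend_col ` ext_C Conv Conv_d Conv_u Conv_bu"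
proof (rule image_prepend_col)
  show "Conv \<subseteq> Collect anchored" unfolding Conv_def by auto
  show "anchored R" if "(R, p) \<in> ext_C Conv Conv_d Conv_u Conv_bu" for R p
    using that Conv_subsets unfolding ext_C_def Conv_def by auto
  show "prepend_col R p \<in> Conv \<longleftrightarrow> (R, p) \<in> ext_C Conv Conv_d Conv_u Conv_bu" if "anchored R" for R p
    using that first_top_nonneg[of R]
    by (cases "snd p \<le> first_top R"; cases "0 \<le> fst p")
      (auto simp: ext_C_def Conv_def Conv_u_def Conv_d_def Conv_bu_def cols_within_def mem_Times_iff
        convex_cols_prepend_col anchored_prepend_col)
qed

lemma Conv_u_prepend_col: "{L \<in> Conv_u. 2 \<le> length L} = case_prod prepend_col ` ext_U Conv_u Conv_bu"
proof (rule image_prepend_col)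
  show "Conv_u \<subseteq> Collect anchored" unfolding Conv_u_def by auto
  show "anchored R" if "(R, p) \<in> ext_U Conv_u Conv_bu" for R p
    using that Conv_subsets unfolding ext_U_def Conv_u_def Conv_bu_def by auto
  show "prepend_col R p \<in> Conv_u \<longleftrightarrow> (R, p) \<in> ext_U Conv_u Conv_bu" if "anchored R" for R p
    using that first_top_nonneg[of R]
    by (cases "0 \<le> fst p")
      (auto simp: ext_U_def Conv_def Conv_u_def Conv_bu_def mem_Times_iff convex_cols_prepend_col
        anchored_prepend_col tops_decr_prepend_col)
qed

lemma Conv_bu_prepend_col: "{L \<in> Conv_bu. 2 \<le> length L} = case_prod prepend_col ` ext_BU Conv_bu"
proof (rule image_prepend_col)
  show "Conv_bu \<subseteq> Collect anchored" unfolding Conv_bu_def by auto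
  show "anchored R" if "(R, p) \<in> ext_BU Conv_bu" for R p
    using that unfolding ext_BU_def Conv_bu_def by auto
  show "prepend_col R p \<in> Conv_bu \<longleftrightarrow> (R, p) \<in> ext_BU Conv_bu" if "anchored R" for R p
    using that first_top_nonneg[of R]
    by (auto simp: ext_BU_def Conv_def Conv_bu_def mem_Times_iff convex_cols_prepend_col anchored_prepend_col
        tops_decr_prepend_col bottoms_incr_prepend_col)
qed

lemma inj_on_prepend_col:
  assumes "T \<subseteq> Conv \<times> UNIV"
  shows "inj_on (case_prod prepend_col) T"
proof (rule inj_onI)
  fix q1 q2 assume "q1 \<in> T" "q2 \<in> T" "case_prod prepend_col q1 = case_prod prepend_col q2"
  then have "anchored (fst q1)" "anchored (fst q2)" "prepend_col (fst q1) (snd q1) = prepend_col (fst q2) (snd q2)"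
    using assms unfolding Conv_def by (auto simp: case_prod_beta)
  then have "fst q1 = fst q2 \<and> snd q1 = snd q2" by (rule prepend_col_inj)
  then show "q1 = q2" by (simp add: prod_eq_iff)
qed

section \<open>Generating functions\<close>

definition weight :: "real \<Rightarrow> real \<Rightarrow> column list \<Rightarrow> real" where
  "weight x y L = x ^ length L * y ^ cols_height L"

definition zweight :: "real \<Rightarrow> real \<Rightarrow> real \<Rightarrow> column list \<Rightarrow> real" where
  "zweight x y z L = weight x y L * z ^ (first_col_size L - 1)"

text \<open>The rows a new column \<open>p\<close> adds above the first column \<open>(0, t)\<close> of \<open>R\<close> or below it are new
  rows of the polyomino, by the monotonicity that the convexity of the result forces on \<open>R\<close>.\<close>

definition new_col_weight :: "real \<Rightarrow> real \<Rightarrow> int \<Rightarrow> column \<Rightarrow> real" where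
  "new_col_weight y z t p = y ^ (nat (snd p - t) + nat (- fst p)) * z ^ nat (snd p - fst p)"

lemma zweight_prepend_col:
  assumes "R \<in> Conv" "convex_cols (prepend_col R p)"
  shows "zweight x y z (prepend_col R p) = x * weight x y R * new_col_weight y z (first_top R) p"
proof -
  have R: "anchored R" "convex_cols R" "R \<noteq> []" "fst (hd R) = 0"
    using assms(1) unfolding Conv_def anchored_def by auto
  note conv = convex_cols_prepend_col[OF R(1), of p, THEN iffD1, OF assms(2)]
  have "cols_height (p # R) = cols_height R + nat (snd p - snd (hd R)) + nat (fst (hd R) - fst p)"
    by (rule cols_height_Cons) (use R conv tops_decr_max_top bottoms_incr_min_bottom in
        \<open>auto simp: first_top_def\<close>)
  moreover have "cols_height (prepend_col R p) = cols_height (p # R)"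
    unfolding prepend_col_eq_shift by (rule cols_height_shift_cols) simp
  ultimately have "cols_height (prepend_col R p) = cols_height R + nat (snd p - first_top R) + nat (- fst p)"
    using R unfolding first_top_def by simp
  moreover have "first_col_size (prepend_col R p) - 1 = nat (snd p - fst p)"
    using first_col_size_prepend_col conv by simp
  ultimately show ?thesis
    unfolding zweight_def weight_def new_col_weight_def by (simp add: power_add)
qed

lemma weight_nonneg: "0 \<le> x \<Longrightarrow> 0 \<le> y \<Longrightarrow> 0 \<le> weight x y L"
  unfolding weight_def by simp

lemma zweight_nonneg: "0 \<le> x \<Longrightarrow> 0 \<le> y \<Longrightarrow> 0 \<le> z \<Longrightarrow> 0 \<le> zweight x y z L"
  unfolding zweight_def weight_def by simp

lemma zweight_1: "zweight x y 1 = weight x y"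
  unfolding zweight_def by simp

lemma has_sum_Sigma_nonneg:
  fixes f :: "'a \<times> 'b \<Rightarrow> real"
  assumes "\<And>a. a \<in> A \<Longrightarrow> ((\<lambda>b. f (a, b)) has_sum g a) (B a)"
    and "(g has_sum S) A"
    and "\<And>a b. a \<in> A \<Longrightarrow> b \<in> B a \<Longrightarrow> 0 \<le> f (a, b)"
  shows "(f has_sum S) (Sigma A B)"
proof (rule has_sum_SigmaI[OF assms(1,2)])
  show "f summable_on Sigma A B"
    by (rule summable_on_SigmaI[OF assms(1)]) (use assms in \<open>auto intro: has_sum_imp_summable\<close>)
qed

lemma has_sum_product_nonneg:
  fixes f :: "'a \<Rightarrow> real" and g :: "'b \<Rightarrow> real"
  assumes "(f has_sum a) A" "(g has_sum b) B" "\<And>u. u \<in> A \<Longrightarrow> 0 \<le> f u" "\<And>v. v \<in> B \<Longrightarrow> 0 \<le> g v"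
  shows "((\<lambda>(u, v). f u * g v) has_sum (a * b)) (A \<times> B)"
proof -
  have "((\<lambda>(u, v). f u * g v) has_sum (a * b)) (Sigma A (\<lambda>_. B))"
  proof (rule has_sum_Sigma_nonneg[where g = "\<lambda>u. f u * b"])
    show "((\<lambda>v. case (u, v) of (u, v) \<Rightarrow> f u * g v) has_sum f u * b) B" if "u \<in> A" for u
      using has_sum_cmult_right[OF assms(2), of "f u"] by simp
    show "((\<lambda>u. f u * b) has_sum a * b) A" by (rule has_sum_cmult_left[OF assms(1)])
    show "0 \<le> (case (u, v) of (u, v) \<Rightarrow> f u * g v)" if "u \<in> A" "v \<in> B" for u v
      using assms(3,4) that by simp
  qed
  then show ?thesis by simp
qed

lemma has_sum_lincomb:
  fixes f g :: "'a \<Rightarrow> real"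
  assumes "(f has_sum a) A" "(g has_sum b) A"
  shows "((\<lambda>x. c * f x + d * g x) has_sum (c * a + d * b)) A"
  by (rule has_sum_add[OF has_sum_cmult_right[OF assms(1)] has_sum_cmult_right[OF assms(2)]])

lemma has_sum_geometric_nonneg:
  fixes q :: real assumes "0 \<le> q" "q < 1"
  shows "((\<lambda>n::nat. q ^ n) has_sum 1 / (1 - q)) UNIV"
  by (rule sums_nonneg_imp_has_sum) (use assms geometric_sums[of q] in auto)

lemma has_sum_power_ge:
  fixes q :: real assumes "0 \<le> q" "q < 1"
  shows "((\<lambda>s::int. q ^ nat (s - t)) has_sum 1 / (1 - q)) {t..}"
proof -
  have "((\<lambda>n::nat. q ^ n) has_sum 1 / (1 - q)) UNIV" by (rule has_sum_geometric_nonneg[OF assms])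
  also have "?this \<longleftrightarrow> ?thesis"
    by (rule has_sum_reindex_bij_witness[where i = "\<lambda>s. nat (s - t)" and j = "\<lambda>n. t + int n"]) auto
  finally show ?thesis .
qed

lemma has_sum_power_gt:
  fixes q :: real assumes "0 \<le> q" "q < 1"
  shows "((\<lambda>s::int. q ^ nat (s - t)) has_sum q / (1 - q)) {t<..}"
proof -
  have "((\<lambda>n::nat. q ^ n) has_sum q / (1 - q)) {1..}" by (rule has_sum_geometric_from_1) (use assms in auto)
  also have "?this \<longleftrightarrow> ?thesis"
    by (rule has_sum_reindex_bij_witness[where i = "\<lambda>s. nat (s - t)" and j = "\<lambda>n. t + int n"]) auto
  finally show ?thesis .
qed

lemma has_sum_power_le0:
  fixes q :: real assumes "0 \<le> q" "q < 1"
  shows "((\<lambda>s::int. q ^ nat (- s)) has_sum 1 / (1 - q)) {..0}"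
proof -
  have "((\<lambda>n::nat. q ^ n) has_sum 1 / (1 - q)) UNIV" by (rule has_sum_geometric_nonneg[OF assms])
  also have "?this \<longleftrightarrow> ?thesis"
    by (rule has_sum_reindex_bij_witness[where i = "\<lambda>s. nat (- s)" and j = "\<lambda>n. - int n"]) auto
  finally show ?thesis .
qed

lemma has_sum_power_lt0:
  fixes q :: real assumes "0 \<le> q" "q < 1"
  shows "((\<lambda>s::int. q ^ nat (- s)) has_sum q / (1 - q)) {..<0}"
proof -
  have "((\<lambda>n::nat. q ^ n) has_sum q / (1 - q)) {1..}" by (rule has_sum_geometric_from_1) (use assms in auto)
  also have "?this \<longleftrightarrow> ?thesis"
    by (rule has_sum_reindex_bij_witness[where i = "\<lambda>s. nat (- s)" and j = "\<lambda>n. - int n"]) auto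
  finally show ?thesis .
qed

lemma has_sum_power_upto:
  fixes z :: real assumes "0 \<le> t"
  shows "((\<lambda>s::int. z ^ nat s) has_sum (\<Sum>j\<le>nat t. z ^ j)) {0..t}"
proof -
  have "(\<Sum>s\<in>{0..t}. z ^ nat s) = (\<Sum>j\<le>nat t. z ^ j)"
    by (rule sum.reindex_bij_witness[where i = "\<lambda>j. int j" and j = "\<lambda>s. nat s"]) (use assms in auto)
  then show ?thesis by (intro has_sum_finiteI) auto
qed

lemma has_sum_power_downto:
  fixes z :: real assumes "0 \<le> t"
  shows "((\<lambda>s::int. z ^ nat (t - s)) has_sum (\<Sum>j\<le>nat t. z ^ j)) {0..t}"
proof -
  have "(\<Sum>s\<in>{0..t}. z ^ nat (t - s)) = (\<Sum>j\<le>nat t. z ^ j)"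
    by (rule sum.reindex_bij_witness[where i = "\<lambda>j. t - int j" and j = "\<lambda>s. nat (t - s)"]) (use assms in auto)
  then show ?thesis by (intro has_sum_finiteI) auto
qed

lemma has_sum_cols_within:
  fixes z :: real assumes "0 \<le> t"
  shows "((\<lambda>p. z ^ nat (snd p - fst p)) has_sum (\<Sum>i\<le>nat t. \<Sum>j\<le>i. z ^ j)) (cols_within t)"
proof -
  have fin: "finite (cols_within t)"
    by (rule finite_subset[of _ "{0..t} \<times> {0..t}"]) (auto simp: cols_within_def)
  have "(\<Sum>p\<in>cols_within t. z ^ nat (snd p - fst p)) = (\<Sum>(i, j)\<in>Sigma {..nat t} (\<lambda>i. {..i}). z ^ j)"
    by (rule sum.reindex_bij_witness[where i = "\<lambda>(i, j). (int i - int j, int i)"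
          and j = "\<lambda>p. (nat (snd p), nat (snd p - fst p))"]) (use assms in \<open>auto simp: cols_within_def\<close>)
  also have "\<dots> = (\<Sum>i\<le>nat t. \<Sum>j\<le>i. z ^ j)" by (simp add: sum.Sigma)
  finally show ?thesis using fin by (intro has_sum_finiteI) auto
qed

lemma double_geometric_sum:
  fixes z :: real
  shows "(1 - z)^2 * (\<Sum>i\<le>n. \<Sum>j\<le>i. z ^ j) = z ^ (n + 2) - (real n + 2) * z + (real n + 1)"
proof (induction n)
  case 0 then show ?case by (simp add: power2_eq_square algebra_simps)
next
  case (Suc n)
  have "(1 - z)^2 * (\<Sum>i\<le>Suc n. \<Sum>j\<le>i. z ^ j)
      = (1 - z)^2 * (\<Sum>i\<le>n. \<Sum>j\<le>i. z ^ j) + (1 - z) * ((1 - z) * (\<Sum>j\<le>Suc n. z ^ j))"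
    by (simp add: algebra_simps power2_eq_square)
  also have "(1 - z) * (\<Sum>j\<le>Suc n. z ^ j) = 1 - z ^ (n + 2)"
    using sum_gp_basic[of z "Suc n"] by simp
  finally show ?case unfolding Suc by (simp add: algebra_simps)
qed

lemma new_col_sum_within:
  assumes "0 \<le> t"
  shows "(new_col_weight y z t has_sum (\<Sum>i\<le>nat t. \<Sum>j\<le>i. z ^ j)) (cols_within t)"
  using has_sum_cols_within[OF assms]
  by (subst has_sum_cong[where g = "\<lambda>p. z ^ nat (snd p - fst p)"]) (auto simp: new_col_weight_def cols_within_def)

lemma new_col_sum_below:
  assumes "0 \<le> t" "0 \<le> y" "0 \<le> z" "y * z < 1"
  shows "(new_col_weight y z t has_sum (y * z / (1 - y * z)) * (\<Sum>j\<le>nat t. z ^ j)) ({..<0} \<times> {0..t})"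
proof -
  have "((\<lambda>(u, v). (y * z) ^ nat (- u) * z ^ nat v) has_sum (y * z / (1 - y * z)) * (\<Sum>j\<le>nat t. z ^ j))
      ({..<0} \<times> {0..t})"
    by (rule has_sum_product_nonneg[OF has_sum_power_lt0 has_sum_power_upto]) (use assms in auto)
  moreover have "new_col_weight y z t p = (\<lambda>(u, v). (y * z) ^ nat (- u) * z ^ nat v) p"
    if "p \<in> {..<0} \<times> {0..t}" for p
  proof -
    have "nat (snd p - fst p) = nat (snd p) + nat (- fst p)" "nat (snd p - t) = 0"
      using that by auto
    then show ?thesis unfolding new_col_weight_def
      by (simp add: case_prod_beta power_add power_mult_distrib algebra_simps)
  qed
  ultimately show ?thesis by (subst has_sum_cong) auto
qed

lemma new_col_sum_above_from:
  assumes "0 \<le> t" "0 \<le> y" "0 \<le> z" "y * z < 1"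
    and B: "((\<lambda>v::int. (y * z) ^ nat (v - t)) has_sum b) V" and V: "V \<subseteq> {t..}"
  shows "(new_col_weight y z t has_sum b * (\<Sum>j\<le>nat t. z ^ j)) ({0..t} \<times> V)"
proof -
  have "((\<lambda>(u, v). z ^ nat (t - u) * (y * z) ^ nat (v - t)) has_sum (\<Sum>j\<le>nat t. z ^ j) * b)
      ({0..t} \<times> V)"
    by (rule has_sum_product_nonneg[OF has_sum_power_downto B]) (use assms in auto)
  then have "((\<lambda>(u, v). z ^ nat (t - u) * (y * z) ^ nat (v - t)) has_sum b * (\<Sum>j\<le>nat t. z ^ j))
      ({0..t} \<times> V)"
    by (simp only: mult.commute)
  moreover have "new_col_weight y z t p = (\<lambda>(u, v). z ^ nat (t - u) * (y * z) ^ nat (v - t)) p"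
    if "p \<in> {0..t} \<times> V" for p
  proof -
    have "0 \<le> fst p" "fst p \<le> t" "t \<le> snd p" using that V by auto
    then have "nat (snd p - fst p) = nat (t - fst p) + nat (snd p - t)" "nat (- fst p) = 0"
      by auto
    then show ?thesis unfolding new_col_weight_def
      by (simp add: case_prod_beta power_add power_mult_distrib algebra_simps)
  qed
  ultimately show ?thesis by (subst has_sum_cong) auto
qed

lemma new_col_sum_below_above_from:
  assumes "0 \<le> t" "0 \<le> y" "0 \<le> z" "y * z < 1"
    and A: "((\<lambda>u::int. (y * z) ^ nat (- u)) has_sum a) U" and U: "U \<subseteq> {..0}"
    and B: "((\<lambda>v::int. (y * z) ^ nat (v - t)) has_sum b) V" and V: "V \<subseteq> {t..}"
  shows "(new_col_weight y z t has_sum a * b * z ^ nat t) (U \<times> V)"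
proof -
  have "((\<lambda>(u, v). (y * z) ^ nat (- u) * (y * z) ^ nat (v - t)) has_sum a * b) (U \<times> V)"
    by (rule has_sum_product_nonneg[OF A B]) (use assms in auto)
  then have "((\<lambda>p. (\<lambda>(u, v). (y * z) ^ nat (- u) * (y * z) ^ nat (v - t)) p * z ^ nat t)
      has_sum a * b * z ^ nat t) (U \<times> V)"
    by (rule has_sum_cmult_left)
  moreover have "new_col_weight y z t p
      = (\<lambda>(u, v). (y * z) ^ nat (- u) * (y * z) ^ nat (v - t)) p * z ^ nat t" if "p \<in> U \<times> V" for p
  proof -
    have "fst p \<le> 0" "t \<le> snd p" using that U V by auto
    then have "nat (snd p - fst p) = nat (- fst p) + nat (snd p - t) + nat t"
      using assms(1) by auto
    then show ?thesis unfolding new_col_weight_def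
      by (simp add: case_prod_beta power_add power_mult_distrib algebra_simps)
  qed
  ultimately show ?thesis by (subst has_sum_cong) auto
qed

lemma has_sum_zweight_Sigma:
  assumes "Y \<subseteq> Conv"
    and inner: "\<And>R. R \<in> Y \<Longrightarrow> (new_col_weight y z (first_top R) has_sum v R) (Q R)"
    and outer: "((\<lambda>R. x * weight x y R * v R) has_sum S) Y"
    and conv: "\<And>R p. R \<in> Y \<Longrightarrow> p \<in> Q R \<Longrightarrow> convex_cols (prepend_col R p)"
    and nonneg: "0 \<le> x" "0 \<le> y" "0 \<le> z"
  shows "((zweight x y z \<circ> case_prod prepend_col) has_sum S) (Sigma Y Q)"
proof (rule has_sum_Sigma_nonneg[OF _ outer])
  fix R assume R: "R \<in> Y"
  have "((\<lambda>p. x * weight x y R * new_col_weight y z (first_top R) p) has_sum x * weight x y R * v R) (Q R)"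
    by (rule has_sum_cmult_right[OF inner[OF R]])
  moreover have "(zweight x y z \<circ> case_prod prepend_col) (R, p)
      = x * weight x y R * new_col_weight y z (first_top R) p" if "p \<in> Q R" for p
    using zweight_prepend_col[of R p x y z] assms(1) R conv[OF R that] by auto
  ultimately show "((\<lambda>p. (zweight x y z \<circ> case_prod prepend_col) (R, p)) has_sum x * weight x y R * v R) (Q R)"
    by (subst has_sum_cong) auto
next
  fix R p show "0 \<le> (zweight x y z \<circ> case_prod prepend_col) (R, p)" using zweight_nonneg nonneg by simp
qed

lemma has_sum_outer_geometric:
  assumes "Y \<subseteq> Conv" "z \<noteq> 1"
    and "(weight x y has_sum a1) Y" "(zweight x y z has_sum az) Y"
  shows "((\<lambda>R. x * weight x y R * (c * (\<Sum>j\<le>nat (first_top R). z ^ j)))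
    has_sum (x * c / (1 - z) * (a1 - z * az))) Y"
proof -
  define K where "K = x * c / (1 - z)"
  have H: "((\<lambda>R. K * weight x y R + (- K * z) * zweight x y z R) has_sum (K * a1 + (- K * z) * az)) Y"
    by (rule has_sum_lincomb[OF assms(3,4)])
  have v: "K * a1 + (- K * z) * az = x * c / (1 - z) * (a1 - z * az)"
    unfolding K_def by (simp add: algebra_simps diff_divide_distrib)
  have eq: "x * weight x y R * (c * (\<Sum>j\<le>nat (first_top R). z ^ j))
      = K * weight x y R + (- K * z) * zweight x y z R" if "R \<in> Y" for R
  proof -
    define n where "n = nat (first_top R)"
    have k: "zweight x y z R = weight x y R * z ^ n"
      unfolding zweight_def n_def using first_col_size_Conv[of R] that assms(1) by auto
    have gp: "(1 - z) * (\<Sum>j\<le>n. z ^ j) = 1 - z * z ^ n" using sum_gp_basic[of z n] by simp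
    have KZ: "K * (1 - z) = x * c" unfolding K_def using assms(2) by simp
    have "x * weight x y R * (c * (\<Sum>j\<le>n. z ^ j)) = (K * (1 - z)) * (weight x y R * (\<Sum>j\<le>n. z ^ j))"
      unfolding KZ by (simp add: mult_ac)
    also have "\<dots> = K * weight x y R * ((1 - z) * (\<Sum>j\<le>n. z ^ j))" by (simp add: mult_ac)
    also have "\<dots> = K * weight x y R + (- K * z) * zweight x y z R"
      unfolding gp k by (simp add: algebra_simps)
    finally show ?thesis unfolding n_def .
  qed
  show ?thesis using H[unfolded v] by (subst has_sum_cong[OF eq]) auto
qed

lemma has_sum_outer_power:
  assumes "Y \<subseteq> Conv" "(zweight x y z has_sum az) Y"
  shows "((\<lambda>R. x * weight x y R * (c * z ^ nat (first_top R))) has_sum (x * c * az)) Y"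
proof -
  have "((\<lambda>R. (x * c) * zweight x y z R) has_sum (x * c) * az) Y" by (rule has_sum_cmult_right[OF assms(2)])
  moreover have "x * weight x y R * (c * z ^ nat (first_top R)) = (x * c) * zweight x y z R" if "R \<in> Y" for R
    using first_col_size_Conv[of R] that assms(1) unfolding zweight_def by auto
  ultimately show ?thesis by (subst has_sum_cong) auto
qed

lemma has_sum_outer_double:
  assumes "Y \<subseteq> Conv" "z \<noteq> 1"
    and C1: "(weight x y has_sum C1) Y" and Cz: "(zweight x y z has_sum Cz) Y"
    and M: "((\<lambda>L. weight x y L * real (first_col_size L)) has_sum M) Y"
  shows "((\<lambda>R. x * weight x y R * (\<Sum>i\<le>nat (first_top R). \<Sum>j\<le>i. z ^ j))
    has_sum (x * (z^2 * Cz - z * (M + C1) + M) / (1 - z)^2)) Y"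
proof -
  define c where "c = x / (1 - z)^2"
  have nz: "(1 - z)^2 \<noteq> 0" using assms(2) by simp
  have "((\<lambda>R. (1 - z) * (weight x y R * real (first_col_size R)) + (- z) * weight x y R)
      has_sum ((1 - z) * M + (- z) * C1)) Y"
    by (rule has_sum_lincomb[OF M C1])
  from has_sum_lincomb[OF Cz this, of "c * z^2" c]
  have H: "((\<lambda>R. (c * z^2) * zweight x y z R + c * ((1 - z) * (weight x y R * real (first_col_size R))
      - z * weight x y R)) has_sum ((c * z^2) * Cz + c * ((1 - z) * M - z * C1))) Y" by simp
  have eq: "x * weight x y R * (\<Sum>i\<le>nat (first_top R). \<Sum>j\<le>i. z ^ j) = (c * z^2) * zweight x y z R
      + c * ((1 - z) * (weight x y R * real (first_col_size R)) - z * weight x y R)" if "R \<in> Y" for R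
  proof -
    define n where "n = nat (first_top R)"
    have k: "first_col_size R = n + 1" using first_col_size_Conv[of R] that assms(1) unfolding n_def by auto
    have "x * weight x y R * (\<Sum>i\<le>n. \<Sum>j\<le>i. z ^ j)
        = c * (weight x y R * ((1 - z)^2 * (\<Sum>i\<le>n. \<Sum>j\<le>i. z ^ j)))"
      unfolding c_def using nz by (simp add: field_simps)
    also have "\<dots> = c * (weight x y R * (z ^ (n + 2) - (real n + 2) * z + (real n + 1)))"
      by (simp only: double_geometric_sum)
    also have "\<dots> = (c * z^2) * zweight x y z R
        + c * ((1 - z) * (weight x y R * real (first_col_size R)) - z * weight x y R)"
      unfolding zweight_def k by (simp add: power_add algebra_simps power2_eq_square)
    finally show ?thesis unfolding n_def .
  qed
  have "(c * z^2) * Cz + c * ((1 - z) * M - z * C1) = x * (z^2 * Cz - z * (M + C1) + M) / (1 - z)^2"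
    unfolding c_def using nz by (simp add: field_simps)
  then show ?thesis using H by (subst has_sum_cong[OF eq]) auto
qed

lemma ext_C_mono:
  "A \<subseteq> A' \<Longrightarrow> D \<subseteq> D' \<Longrightarrow> U \<subseteq> U' \<Longrightarrow> B \<subseteq> B' \<Longrightarrow> ext_C A D U B \<subseteq> ext_C A' D' U' B'"
  unfolding ext_C_def by (intro Un_mono Sigma_mono) auto

lemma convex_cols_prepend_col_image:
  assumes "{L \<in> X. 2 \<le> length L} = case_prod prepend_col ` T" "X \<subseteq> Conv" "(R, p) \<in> T"
  shows "convex_cols (prepend_col R p)"
proof -
  have "prepend_col R p \<in> {L \<in> X. 2 \<le> length L}"
    unfolding assms(1) by (rule image_eqI[of _ _ "(R, p)"]) (use assms(3) in simp_all)
  then have "prepend_col R p \<in> Conv" using assms(2) by blast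
  then show ?thesis unfolding Conv_def by simp
qed

lemma has_sum_ext_C:
  assumes nonneg: "0 \<le> x" "0 \<le> y" "0 \<le> z" "y * z < 1" and "z \<noteq> 1"
    and sub: "A \<subseteq> Conv" "D \<subseteq> Conv_d" "U \<subseteq> Conv_u" "B \<subseteq> Conv_bu"
    and Cz: "(zweight x y z has_sum Cz) A" and C1: "(weight x y has_sum C1) A"
    and M: "((\<lambda>L. weight x y L * real (first_col_size L)) has_sum M) A"
    and Uz: "(zweight x y z has_sum Uz) U" and U1: "(weight x y has_sum U1) U"
    and Dz: "(zweight x y z has_sum Dz) D" and D1: "(weight x y has_sum D1) D"
    and Bz: "(zweight x y z has_sum Bz) B"
  shows "((zweight x y z \<circ> case_prod prepend_col) has_sum
      (x * (z^2 * Cz - z * (M + C1) + M) / (1 - z)^2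
        + x * (y * z / (1 - y * z)) / (1 - z) * (D1 - z * Dz)
        + x * (y * z / (1 - y * z)) / (1 - z) * (U1 - z * Uz)
        + x * (y * z / (1 - y * z) * (y * z / (1 - y * z))) * Bz)) (ext_C A D U B)"
proof -
  define c where "c = y * z / (1 - y * z)"
  have subs: "A \<subseteq> Conv" "D \<subseteq> Conv" "U \<subseteq> Conv" "B \<subseteq> Conv" using sub Conv_subsets by auto
  have conv: "convex_cols (prepend_col R p)" if "(R, p) \<in> ext_C A D U B" for R p
    using convex_cols_prepend_col_image[OF Conv_prepend_col order_refl] that ext_C_mono[OF sub] by blast
  then have conv_parts:
    "\<And>R p. R \<in> A \<Longrightarrow> p \<in> cols_within (first_top R) \<Longrightarrow> convex_cols (prepend_col R p)"
    "\<And>R p. R \<in> D \<Longrightarrow> p \<in> {..<0} \<times> {0..first_top R} \<Longrightarrow> convex_cols (prepend_col R p)"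
    "\<And>R p. R \<in> U \<Longrightarrow> p \<in> {0..first_top R} \<times> {first_top R<..} \<Longrightarrow> convex_cols (prepend_col R p)"
    "\<And>R p. R \<in> B \<Longrightarrow> p \<in> {..<0} \<times> {first_top R<..} \<Longrightarrow> convex_cols (prepend_col R p)"
    unfolding ext_C_def by blast+
  have t: "0 \<le> first_top R" if "R \<in> Conv" for R using first_top_nonneg that .
  have yz: "0 \<le> y * z" using nonneg by simp
  have "((zweight x y z \<circ> case_prod prepend_col) has_sum x * (z^2 * Cz - z * (M + C1) + M) / (1 - z)^2)
      (Sigma A (\<lambda>R. cols_within (first_top R)))"
  proof (rule has_sum_zweight_Sigma[OF subs(1) _ has_sum_outer_double[OF subs(1) \<open>z \<noteq> 1\<close> C1 Cz M]])
    show "(new_col_weight y z (first_top R) has_sum (\<Sum>i\<le>nat (first_top R). \<Sum>j\<le>i. z ^ j))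
        (cols_within (first_top R))" if "R \<in> A" for R
      by (rule new_col_sum_within) (use t subs that in blast)
  qed (fact conv_parts nonneg)+
  moreover have "((zweight x y z \<circ> case_prod prepend_col) has_sum x * c / (1 - z) * (D1 - z * Dz))
      (Sigma D (\<lambda>R. {..<0} \<times> {0..first_top R}))"
  proof (rule has_sum_zweight_Sigma[OF subs(2) _ has_sum_outer_geometric[OF subs(2) \<open>z \<noteq> 1\<close> D1 Dz]])
    show "(new_col_weight y z (first_top R) has_sum c * (\<Sum>j\<le>nat (first_top R). z ^ j))
        ({..<0} \<times> {0..first_top R})" if "R \<in> D" for R
      unfolding c_def by (rule new_col_sum_below) (use t subs that nonneg in auto)
  qed (fact conv_parts nonneg)+
  moreover have "((zweight x y z \<circ> case_prod prepend_col) has_sum x * c / (1 - z) * (U1 - z * Uz))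
      (Sigma U (\<lambda>R. {0..first_top R} \<times> {first_top R<..}))"
  proof (rule has_sum_zweight_Sigma[OF subs(3) _ has_sum_outer_geometric[OF subs(3) \<open>z \<noteq> 1\<close> U1 Uz]])
    show "(new_col_weight y z (first_top R) has_sum c * (\<Sum>j\<le>nat (first_top R). z ^ j))
        ({0..first_top R} \<times> {first_top R<..})" if "R \<in> U" for R
      unfolding c_def by (rule new_col_sum_above_from[OF _ _ _ _ has_sum_power_gt])
        (use t subs that nonneg yz in auto)
  qed (fact conv_parts nonneg)+
  moreover have "((zweight x y z \<circ> case_prod prepend_col) has_sum x * (c * c) * Bz)
      (Sigma B (\<lambda>R. {..<0} \<times> {first_top R<..}))"
  proof (rule has_sum_zweight_Sigma[OF subs(4) _ has_sum_outer_power[OF subs(4) Bz]])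
    show "(new_col_weight y z (first_top R) has_sum c * c * z ^ nat (first_top R))
        ({..<0} \<times> {first_top R<..})" if "R \<in> B" for R
      unfolding c_def by (rule new_col_sum_below_above_from[OF _ _ _ _ has_sum_power_lt0 _ has_sum_power_gt])
        (use t subs that nonneg yz in auto)
  qed (fact conv_parts nonneg)+
  ultimately show ?thesis
    unfolding ext_C_def c_def[symmetric]
    by (intro has_sum_Un_disjoint) (auto simp: cols_within_def)
qed

definition single_cols :: "column list set" where
  "single_cols = range (\<lambda>n::nat. [(0, int n)])"

lemma short_Conv:
  assumes "X \<in> {Conv, Conv_u, Conv_d, Conv_bu}"
  shows "{L \<in> X. \<not> 2 \<le> length L} = single_cols"
proof
  show "{L \<in> X. \<not> 2 \<le> length L} \<subseteq> single_cols"
  proof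
    fix L assume L: "L \<in> {L \<in> X. \<not> 2 \<le> length L}"
    then have "L \<in> Conv" using assms Conv_subsets by auto
    have "length L = 1" using L \<open>L \<in> Conv\<close> unfolding Conv_def anchored_def by (cases L) (auto simp: Suc_le_eq)
    then obtain c where "L = [c]" by (metis One_nat_def length_0_conv length_Suc_conv)
    then have c: "L = [c]" "fst c = 0" "fst c \<le> snd c" using \<open>L \<in> Conv\<close> unfolding Conv_def anchored_def
      by (auto simp: convex_cols_single)
    then have "L = [(0, int (nat (snd c)))]" by (cases c) auto
    then show "L \<in> single_cols" unfolding single_cols_def by blast
  qed
  show "single_cols \<subseteq> {L \<in> X. \<not> 2 \<le> length L}"
    using assms unfolding single_cols_def Conv_def Conv_u_def Conv_d_def Conv_bu_def anchored_def
    by (auto simp: convex_cols_single tops_decr_def bottoms_incr_def)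
qed

lemma has_sum_zweight_single_cols:
  assumes "0 \<le> y" "0 \<le> z" "y * z < 1"
  shows "(zweight x y z has_sum x * y / (1 - y * z)) single_cols"
proof -
  have "((\<lambda>n::nat. (x * y) * (y * z) ^ n) has_sum (x * y) * (1 / (1 - y * z))) UNIV"
    by (rule has_sum_cmult_right[OF has_sum_geometric_nonneg]) (use assms in auto)
  also have "?this \<longleftrightarrow> (zweight x y z has_sum (x * y) * (1 / (1 - y * z))) single_cols"
    unfolding single_cols_def
    by (rule has_sum_reindex_bij_witness[where i = "\<lambda>L. nat (snd (hd L))" and j = "\<lambda>n. [(0, int n)]"])
       (auto simp: zweight_def weight_def cols_height_def first_col_size_def power_mult_distrib nat_add_distrib)
  finally show ?thesis by simp
qed

lemma has_sum_zweight_decompose: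
  assumes short: "{L \<in> X. \<not> 2 \<le> length L} = single_cols"
    and long: "{L \<in> X. 2 \<le> length L} = case_prod prepend_col ` T" and T: "T \<subseteq> Conv \<times> UNIV"
    and S: "((zweight x y z \<circ> case_prod prepend_col) has_sum S) T"
    and "0 \<le> y" "0 \<le> z" "y * z < 1"
  shows "(zweight x y z has_sum (x * y / (1 - y * z) + S)) X"
proof -
  have s1: "(zweight x y z has_sum x * y / (1 - y * z)) {L \<in> X. \<not> 2 \<le> length L}"
    unfolding short by (rule has_sum_zweight_single_cols) fact+
  have s2: "(zweight x y z has_sum S) {L \<in> X. 2 \<le> length L}"
    unfolding long using has_sum_reindex[OF inj_on_prepend_col[OF T]] S by blast
  have "X = {L \<in> X. \<not> 2 \<le> length L} \<union> {L \<in> X. 2 \<le> length L}" by auto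
  then show ?thesis using has_sum_Un_disjoint[OF s1 s2] by auto
qed

lemma Conv_equation:
  assumes nonneg: "0 \<le> x" "0 \<le> y" "0 \<le> z" "y * z < 1" and "z \<noteq> 1"
    and Cz: "(zweight x y z has_sum Cz) Conv" and C1: "(weight x y has_sum C1) Conv"
    and M: "((\<lambda>L. weight x y L * real (first_col_size L)) has_sum M) Conv"
    and Uz: "(zweight x y z has_sum Uz) Conv_u" and U1: "(weight x y has_sum U1) Conv_u"
    and Dz: "(zweight x y z has_sum Dz) Conv_d" and D1: "(weight x y has_sum D1) Conv_d"
    and Bz: "(zweight x y z has_sum Bz) Conv_bu"
  shows "Cz = x * y / (1 - y * z) + x * (z^2 * Cz - z * (M + C1) + M) / (1 - z)^2
     + x * (y * z / (1 - y * z)) / (1 - z) * (D1 - z * Dz)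
     + x * (y * z / (1 - y * z)) / (1 - z) * (U1 - z * Uz)
     + x * (y * z / (1 - y * z) * (y * z / (1 - y * z))) * Bz"
proof -
  have T: "ext_C Conv Conv_d Conv_u Conv_bu \<subseteq> Conv \<times> UNIV"
    using Conv_subsets unfolding ext_C_def by blast
  note S = has_sum_ext_C[OF nonneg \<open>z \<noteq> 1\<close> order_refl order_refl order_refl order_refl Cz C1 M Uz U1 Dz D1 Bz]
  have "Conv \<in> {Conv, Conv_u, Conv_d, Conv_bu}" by simp
  from has_sum_zweight_decompose[OF short_Conv[OF this] Conv_prepend_col T S nonneg(2-4)]
  have "Cz = x * y / (1 - y * z) + (x * (z^2 * Cz - z * (M + C1) + M) / (1 - z)^2
      + x * (y * z / (1 - y * z)) / (1 - z) * (D1 - z * Dz)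
      + x * (y * z / (1 - y * z)) / (1 - z) * (U1 - z * Uz)
      + x * (y * z / (1 - y * z) * (y * z / (1 - y * z))) * Bz)"
    by (rule has_sum_unique[OF Cz])
  then show ?thesis by (simp only: add.assoc)
qed

lemma Conv_u_equation:
  assumes nonneg: "0 \<le> x" "0 \<le> y" "0 \<le> z" "y * z < 1" and "z \<noteq> 1"
    and Uz: "(zweight x y z has_sum Uz) Conv_u" and U1: "(weight x y has_sum U1) Conv_u"
    and Bz: "(zweight x y z has_sum Bz) Conv_bu"
  shows "Uz = x * y / (1 - y * z) + x * (1 / (1 - y * z)) / (1 - z) * (U1 - z * Uz)
     + x * (y * z / (1 - y * z) * (1 / (1 - y * z))) * Bz"
proof -
  define c d where "c = 1 / (1 - y * z)" and "d = y * z / (1 - y * z)"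
  have subs: "Conv_u \<subseteq> Conv" "Conv_bu \<subseteq> Conv" using Conv_subsets by auto
  have T: "ext_U Conv_u Conv_bu \<subseteq> Conv \<times> UNIV" using subs unfolding ext_U_def by blast
  have conv: "convex_cols (prepend_col R p)" if "(R, p) \<in> ext_U Conv_u Conv_bu" for R p
    by (rule convex_cols_prepend_col_image[OF Conv_u_prepend_col subs(1) that])
  then have conv_parts:
    "\<And>R p. R \<in> Conv_u \<Longrightarrow> p \<in> {0..first_top R} \<times> {first_top R..} \<Longrightarrow> convex_cols (prepend_col R p)"
    "\<And>R p. R \<in> Conv_bu \<Longrightarrow> p \<in> {..<0} \<times> {first_top R..} \<Longrightarrow> convex_cols (prepend_col R p)"
    unfolding ext_U_def by blast+
  have t: "0 \<le> first_top R" if "R \<in> Conv" for R using first_top_nonneg that .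
  have yz: "0 \<le> y * z" using nonneg by simp
  have "((zweight x y z \<circ> case_prod prepend_col) has_sum x * c / (1 - z) * (U1 - z * Uz))
      (Sigma Conv_u (\<lambda>R. {0..first_top R} \<times> {first_top R..}))"
  proof (rule has_sum_zweight_Sigma[OF subs(1) _ has_sum_outer_geometric[OF subs(1) \<open>z \<noteq> 1\<close> U1 Uz]])
    show "(new_col_weight y z (first_top R) has_sum c * (\<Sum>j\<le>nat (first_top R). z ^ j))
        ({0..first_top R} \<times> {first_top R..})" if "R \<in> Conv_u" for R
      unfolding c_def by (rule new_col_sum_above_from[OF _ _ _ _ has_sum_power_ge])
        (use t subs that nonneg yz in auto)
  qed (fact conv_parts nonneg)+
  moreover have "((zweight x y z \<circ> case_prod prepend_col) has_sum x * (d * c) * Bz)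
      (Sigma Conv_bu (\<lambda>R. {..<0} \<times> {first_top R..}))"
  proof (rule has_sum_zweight_Sigma[OF subs(2) _ has_sum_outer_power[OF subs(2) Bz]])
    show "(new_col_weight y z (first_top R) has_sum d * c * z ^ nat (first_top R))
        ({..<0} \<times> {first_top R..})" if "R \<in> Conv_bu" for R
      unfolding c_def d_def by (rule new_col_sum_below_above_from[OF _ _ _ _ has_sum_power_lt0 _ has_sum_power_ge])
        (use t subs that nonneg yz in auto)
  qed (fact conv_parts nonneg)+
  ultimately have S: "((zweight x y z \<circ> case_prod prepend_col) has_sum
      x * c / (1 - z) * (U1 - z * Uz) + x * (d * c) * Bz) (ext_U Conv_u Conv_bu)"
    unfolding ext_U_def by (intro has_sum_Un_disjoint) auto
  have "Conv_u \<in> {Conv, Conv_u, Conv_d, Conv_bu}" by simp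
  from has_sum_zweight_decompose[OF short_Conv[OF this] Conv_u_prepend_col T S nonneg(2-4)]
  have "Uz = x * y / (1 - y * z) + (x * c / (1 - z) * (U1 - z * Uz) + x * (d * c) * Bz)"
    by (rule has_sum_unique[OF Uz])
  then show ?thesis unfolding c_def d_def by (simp only: add.assoc)
qed

lemma Conv_bu_equation:
  assumes nonneg: "0 \<le> x" "0 \<le> y" "0 \<le> z" "y * z < 1"
    and Bz: "(zweight x y z has_sum Bz) Conv_bu"
  shows "Bz = x * y / (1 - y * z) + x * (1 / (1 - y * z) * (1 / (1 - y * z))) * Bz"
proof -
  define c where "c = 1 / (1 - y * z)"
  have sub: "Conv_bu \<subseteq> Conv" using Conv_subsets by auto
  have T: "ext_BU Conv_bu \<subseteq> Conv \<times> UNIV" using sub unfolding ext_BU_def by blast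
  have conv: "convex_cols (prepend_col R p)" if "(R, p) \<in> ext_BU Conv_bu" for R p
    by (rule convex_cols_prepend_col_image[OF Conv_bu_prepend_col sub that])
  have t: "0 \<le> first_top R" if "R \<in> Conv" for R using first_top_nonneg that .
  have yz: "0 \<le> y * z" using nonneg by simp
  have S: "((zweight x y z \<circ> case_prod prepend_col) has_sum x * (c * c) * Bz) (ext_BU Conv_bu)"
    unfolding ext_BU_def
  proof (rule has_sum_zweight_Sigma[OF sub _ has_sum_outer_power[OF sub Bz]])
    show "(new_col_weight y z (first_top R) has_sum c * c * z ^ nat (first_top R))
        ({..0} \<times> {first_top R..})" if "R \<in> Conv_bu" for R
      unfolding c_def by (rule new_col_sum_below_above_from[OF _ _ _ _ has_sum_power_le0 _ has_sum_power_ge])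
        (use t sub that nonneg yz in auto)
  qed (use conv nonneg in \<open>simp_all add: ext_BU_def\<close>)
  have "Conv_bu \<in> {Conv, Conv_u, Conv_d, Conv_bu}" by simp
  from has_sum_zweight_decompose[OF short_Conv[OF this] Conv_bu_prepend_col T S nonneg(2-4)]
  show ?thesis unfolding c_def by (rule has_sum_unique[OF Bz])
qed

section \<open>Convergence\<close>

text \<open>All later evaluation points \<open>z\<close> lie in \<open>[0, 4]\<close>, so the series at \<open>z = 4\<close> dominates them.
  Its part over lists of length \<open>m + 1\<close> is at most \<open>x / (1 - 4 y) * (3 x)\<^sup>m\<close>, by induction on
  \<open>m\<close> through the functional equation.\<close>

lemma real_Suc_le_power_4: "real (Suc j) \<le> 4 ^ j"
proof (induction j)
  case (Suc j)
  have "(1::real) \<le> 4 ^ j" by simp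
  then show ?case using Suc by simp
qed simp

lemma zweight_le_zweight_4: "0 \<le> x \<Longrightarrow> 0 \<le> y \<Longrightarrow> 0 \<le> z \<Longrightarrow> z \<le> 4 \<Longrightarrow> zweight x y z L \<le> zweight x y 4 L"
  unfolding zweight_def weight_def by (intro mult_left_mono power_mono) auto

lemma weight_le_zweight_4: "0 \<le> x \<Longrightarrow> 0 \<le> y \<Longrightarrow> weight x y L \<le> zweight x y 4 L"
  using zweight_le_zweight_4[of x y 1 L] unfolding zweight_1 by simp

lemma weight_first_col_size_le_zweight_4:
  assumes "0 \<le> x" "0 \<le> y" "L \<in> Conv"
  shows "weight x y L * real (first_col_size L) \<le> zweight x y 4 L"
proof -
  obtain j where j: "first_col_size L = Suc j" using first_col_size_Conv[OF assms(3)] by auto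
  show ?thesis unfolding zweight_def j using real_Suc_le_power_4[of j] weight_nonneg[OF assms(1,2), of L]
    by (simp add: mult_left_mono)
qed

lemma summable_on_dominated:
  fixes f :: "column list \<Rightarrow> real"
  assumes "zweight x y 4 summable_on Y" "Z \<subseteq> Y" and "\<And>L. L \<in> Z \<Longrightarrow> 0 \<le> f L \<and> f L \<le> zweight x y 4 L"
  shows "f summable_on Z"
  by (rule summable_on_comparison_test[OF summable_on_subset_banach[OF assms(1,2)]]) (use assms(3) in auto)

lemma ext_C_length:
  "ext_C {L \<in> Conv. length L = m} {L \<in> Conv_d. length L = m} {L \<in> Conv_u. length L = m} {L \<in> Conv_bu. length L = m}
    = {q \<in> ext_C Conv Conv_d Conv_u Conv_bu. length (fst q) = m}"
  unfolding ext_C_def by auto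

lemma Conv_length_Suc:
  assumes "1 \<le> m"
  shows "{L \<in> Conv. length L = Suc m} = case_prod prepend_col `
    ext_C {L \<in> Conv. length L = m} {L \<in> Conv_d. length L = m} {L \<in> Conv_u. length L = m} {L \<in> Conv_bu. length L = m}"
proof -
  have "{L \<in> Conv. length L = Suc m} = {L \<in> {L \<in> Conv. 2 \<le> length L}. length L = Suc m}" using assms by auto
  also have "\<dots> = {L \<in> case_prod prepend_col ` ext_C Conv Conv_d Conv_u Conv_bu. length L = Suc m}"
    unfolding Conv_prepend_col ..
  also have "\<dots> = case_prod prepend_col ` {q \<in> ext_C Conv Conv_d Conv_u Conv_bu. length (fst q) = m}"
    by force
  finally show ?thesis unfolding ext_C_length .
qed

lemma Conv_length_1: "{L \<in> Conv. length L = 1} = single_cols"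
proof -
  have "length L = 1 \<longleftrightarrow> \<not> 2 \<le> length L" if "L \<in> Conv" for L
    using that unfolding Conv_def anchored_def by (cases L) (auto simp: Suc_le_eq)
  then have "{L \<in> Conv. length L = 1} = {L \<in> Conv. \<not> 2 \<le> length L}" by blast
  then show ?thesis using short_Conv[of Conv] by simp
qed

lemma ext_C_value_at_4_le:
  fixes x y Cz C1 M Dz D1 Uz U1 Bz :: real
  assumes x: "0 < x" "x \<le> 1/6" and y: "0 < y" "y \<le> 1/40"
    and nonneg: "0 \<le> C1" "0 \<le> M" "0 \<le> D1" "0 \<le> U1" "0 \<le> Dz" "0 \<le> Uz" "0 \<le> Bz"
    and le: "Dz \<le> Cz" "Uz \<le> Cz" "Bz \<le> Cz"
  shows "x * (4^2 * Cz - 4 * (M + C1) + M) / (1 - 4)^2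
      + x * (y * 4 / (1 - y * 4)) / (1 - 4) * (D1 - 4 * Dz)
      + x * (y * 4 / (1 - y * 4)) / (1 - 4) * (U1 - 4 * Uz)
      + x * (y * 4 / (1 - y * 4) * (y * 4 / (1 - y * 4))) * Bz \<le> 3 * x * Cz"
proof -
  define c where "c = y * 4 / (1 - y * 4)"
  have c: "0 \<le> c" "c \<le> 1/9" using y unfolding c_def by (auto simp: field_simps)
  have "x * (4^2 * Cz - 4 * (M + C1) + M) / (1 - 4)^2 + x * c / (1 - 4) * (D1 - 4 * Dz)
      + x * c / (1 - 4) * (U1 - 4 * Uz) + x * (c * c) * Bz
      \<le> x * (16/9) * Cz + x * c * (4/3) * Dz + x * c * (4/3) * Uz + x * (c * c) * Bz"
    using nonneg x c by (simp add: field_simps)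
  also have "\<dots> \<le> x * (16/9) * Cz + x * (1/9) * (4/3) * Cz + x * (1/9) * (4/3) * Cz + x * ((1/9) * (1/9)) * Cz"
    using le nonneg x c by (intro add_mono mult_mono mult_left_mono) auto
  also have "\<dots> \<le> 3 * x * Cz" using x nonneg le by (simp add: field_simps)
  finally show ?thesis unfolding c_def .
qed

lemma zweight_4_next_length:
  assumes x: "0 < x" "x \<le> 1/6" and y: "0 < y" "y \<le> 1/40" and "1 \<le> n"
    and sA: "zweight x y 4 summable_on {L \<in> Conv. length L = n}"
  shows "zweight x y 4 summable_on {L \<in> Conv. length L = Suc n}"
    and "infsum (zweight x y 4) {L \<in> Conv. length L = Suc n}
      \<le> 3 * x * infsum (zweight x y 4) {L \<in> Conv. length L = n}"
proof -
  define A D U B where "A = {L \<in> Conv. length L = n}" and "D = {L \<in> Conv_d. length L = n}"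
    and "U = {L \<in> Conv_u. length L = n}" and "B = {L \<in> Conv_bu. length L = n}"
  have nonneg: "0 \<le> x" "0 \<le> y" "(0::real) \<le> 4" "y * 4 < 1" "(4::real) \<noteq> 1" using x y by auto
  have subs: "A \<subseteq> Conv" "D \<subseteq> Conv_d" "U \<subseteq> Conv_u" "B \<subseteq> Conv_bu" "D \<subseteq> A" "U \<subseteq> A" "B \<subseteq> A"
    unfolding A_def D_def U_def B_def using Conv_subsets by auto
  have w: "\<And>L. 0 \<le> zweight x y 4 L" "\<And>L. 0 \<le> weight x y L" using zweight_nonneg weight_nonneg nonneg by auto
  have dom: "f summable_on Z" if "Z \<subseteq> A" "\<And>L. L \<in> Z \<Longrightarrow> 0 \<le> f L \<and> f L \<le> zweight x y 4 L" for f Z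
    by (rule summable_on_dominated[OF sA[folded A_def] that])
  have dom1: "weight x y summable_on Z" and dom4: "zweight x y 4 summable_on Z" if "Z \<subseteq> A" for Z
    using dom[OF that] w weight_le_zweight_4 nonneg by auto
  have domM: "(\<lambda>L. weight x y L * real (first_col_size L)) summable_on A"
    by (rule dom[OF order_refl]) (use w weight_first_col_size_le_zweight_4 nonneg subs in auto)
  define Cz C1 M Dz D1 Uz U1 Bz where "Cz = infsum (zweight x y 4) A" and "C1 = infsum (weight x y) A"
    and "M = infsum (\<lambda>L. weight x y L * real (first_col_size L)) A"
    and "Dz = infsum (zweight x y 4) D" and "D1 = infsum (weight x y) D"
    and "Uz = infsum (zweight x y 4) U" and "U1 = infsum (weight x y) U"
    and "Bz = infsum (zweight x y 4) B"
  define V where "V = x * (4^2 * Cz - 4 * (M + C1) + M) / (1 - 4)^2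
      + x * (y * 4 / (1 - y * 4)) / (1 - 4) * (D1 - 4 * Dz)
      + x * (y * 4 / (1 - y * 4)) / (1 - 4) * (U1 - 4 * Uz)
      + x * (y * 4 / (1 - y * 4) * (y * 4 / (1 - y * 4))) * Bz"
  have "((zweight x y 4 \<circ> case_prod prepend_col) has_sum V) (ext_C A D U B)"
    unfolding V_def Cz_def C1_def M_def Dz_def D1_def Uz_def U1_def Bz_def
    by (rule has_sum_ext_C[OF nonneg subs(1-4)])
      (use dom1 dom4 domM subs in \<open>auto intro: has_sum_infsum\<close>)
  moreover have "ext_C A D U B \<subseteq> Conv \<times> UNIV"
    using subs Conv_subsets unfolding ext_C_def by blast
  ultimately have hV: "(zweight x y 4 has_sum V) {L \<in> Conv. length L = Suc n}"
    unfolding Conv_length_Suc[OF \<open>1 \<le> n\<close>] A_def[symmetric] D_def[symmetric] U_def[symmetric] B_def[symmetric]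
    using has_sum_reindex[OF inj_on_prepend_col] by blast
  then show "zweight x y 4 summable_on {L \<in> Conv. length L = Suc n}" by (rule has_sum_imp_summable)
  have "infsum (zweight x y 4) {L \<in> Conv. length L = Suc n} = V" using hV by (rule infsumI)
  also have "V \<le> 3 * x * Cz"
    unfolding V_def
  proof (rule ext_C_value_at_4_le[OF x y])
    show "0 \<le> C1" "0 \<le> M" "0 \<le> D1" "0 \<le> U1" "0 \<le> Dz" "0 \<le> Uz" "0 \<le> Bz"
      unfolding C1_def M_def D1_def U1_def Dz_def Uz_def Bz_def
      by (intro infsum_nonneg; use w nonneg in simp)+
    show "Dz \<le> Cz" "Uz \<le> Cz" "Bz \<le> Cz"
      unfolding Dz_def Uz_def Bz_def Cz_def
      by (intro infsum_mono2; use sA[folded A_def] dom4 subs w in auto)+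
  qed
  finally show "infsum (zweight x y 4) {L \<in> Conv. length L = Suc n}
      \<le> 3 * x * infsum (zweight x y 4) {L \<in> Conv. length L = n}" unfolding Cz_def A_def .
qed

lemma zweight_4_length_bound:
  assumes x: "0 < x" "x \<le> 1/6" and y: "0 < y" "y \<le> 1/40"
  shows "zweight x y 4 summable_on {L \<in> Conv. length L = Suc m}
    \<and> infsum (zweight x y 4) {L \<in> Conv. length L = Suc m} \<le> x / (1 - 4 * y) * (3 * x) ^ m"
proof (induction m)
  case 0
  have h: "(zweight x y 4 has_sum x * y / (1 - y * 4)) {L \<in> Conv. length L = 1}"
    unfolding Conv_length_1 by (rule has_sum_zweight_single_cols) (use y in auto)
  have "x * y / (1 - y * 4) \<le> x / (1 - y * 4)" using x y by (intro divide_right_mono) (auto simp: mult_left_le)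
  then show ?case using h by (simp add: has_sum_iff mult.commute)
next
  case (Suc m)
  note step = zweight_4_next_length[OF x y _ Suc[THEN conjunct1], simplified]
  have "infsum (zweight x y 4) {L \<in> Conv. length L = Suc (Suc m)}
      \<le> 3 * x * infsum (zweight x y 4) {L \<in> Conv. length L = Suc m}"
    by (rule step(2))
  also have "\<dots> \<le> 3 * x * (x / (1 - 4 * y) * (3 * x) ^ m)"
    using Suc x by (intro mult_left_mono) auto
  finally show ?case using step(1) by (simp add: mult_ac)
qed

lemma summable_zweight_4:
  assumes x: "0 < x" "x \<le> 1/6" and y: "0 < y" "y \<le> 1/40"
  shows "zweight x y 4 summable_on Conv"
proof -
  have Conv_Union: "Conv = (\<Union>m. {L \<in> Conv. length L = Suc m})"
  proof
    show "Conv \<subseteq> (\<Union>m. {L \<in> Conv. length L = Suc m})"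
    proof
      fix L assume L: "L \<in> Conv"
      then have "length L = Suc (length L - 1)" unfolding Conv_def anchored_def by (cases L) auto
      then show "L \<in> (\<Union>m. {L \<in> Conv. length L = Suc m})" using L by blast
    qed
  qed auto
  have "(\<lambda>m. infsum (zweight x y 4) {L \<in> Conv. length L = Suc m}) summable_on UNIV"
  proof (rule summable_on_comparison_test)
    show "(\<lambda>m. x / (1 - 4 * y) * (3 * x) ^ m) summable_on UNIV"
      using has_sum_cmult_right[OF has_sum_geometric_nonneg[of "3 * x"], of "x / (1 - 4 * y)"] x
      by (auto intro: has_sum_imp_summable)
    show "infsum (zweight x y 4) {L \<in> Conv. length L = Suc m} \<le> x / (1 - 4 * y) * (3 * x) ^ m" for m
      using zweight_4_length_bound[OF x y] by blast
    show "0 \<le> infsum (zweight x y 4) {L \<in> Conv. length L = Suc m}" for m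
      by (rule infsum_nonneg) (use zweight_nonneg x y in auto)
  qed
  then have "zweight x y 4 summable_on (\<Union>m. {L \<in> Conv. length L = Suc m})"
  proof (rule summable_on_UnionI[rotated])
    show "(zweight x y 4 has_sum infsum (zweight x y 4) {L \<in> Conv. length L = Suc m}) {L \<in> Conv. length L = Suc m}" for m
      using zweight_4_length_bound[OF x y] by (auto intro: has_sum_infsum)
    show "0 \<le> zweight x y 4 L" for L using zweight_nonneg x y by auto
    show "disjoint_family_on (\<lambda>m. {L \<in> Conv. length L = Suc m}) UNIV"
      unfolding disjoint_family_on_def by auto
  qed
  then show ?thesis using Conv_Union by simp
qed

section \<open>Solving the functional equations\<close>

lemma infsum_zweight_Conv_d: "infsum (zweight x y z) Conv_d = infsum (zweight x y z) Conv_u"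
proof -
  have bij: "bij_betw flip_cols Conv_u Conv_d"
    by (rule bij_betw_byWitness[where f' = flip_cols])
      (use flip_cols_Conv_u flip_cols_props(2) in \<open>auto simp: Conv_u_def Conv_d_def\<close>)
  have "(zweight x y z has_sum S) Conv_u \<longleftrightarrow> (zweight x y z has_sum S) Conv_d" for S
  proof -
    have "((\<lambda>L. zweight x y z (flip_cols L)) has_sum S) Conv_u \<longleftrightarrow> (zweight x y z has_sum S) Conv_d"
      by (rule has_sum_reindex_bij_betw[OF bij])
    moreover have "((\<lambda>L. zweight x y z (flip_cols L)) has_sum S) Conv_u \<longleftrightarrow> (zweight x y z has_sum S) Conv_u"
      by (rule has_sum_cong) (use flip_cols_props in \<open>auto simp: Conv_u_def zweight_def weight_def\<close>)
    ultimately show ?thesis by simp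
  qed
  then show ?thesis
    by (metis has_sum_infsum infsumI infsum_not_exists summable_on_def)
qed

definition kernel_u :: "real \<Rightarrow> real \<Rightarrow> real \<Rightarrow> real" where
  "kernel_u x y z = (1 - z) * (1 - y * z) + x * z"

text \<open>The terms of the equation for \<open>Conv\<close> not involving its own series, once the series of
  \<open>Conv_d\<close> is replaced by that of \<open>Conv_u\<close>.\<close>

definition Conv_inhom :: "real \<Rightarrow> real \<Rightarrow> real \<Rightarrow> real \<Rightarrow> real \<Rightarrow> real \<Rightarrow> real" where
  "Conv_inhom x y z u1 u b = x * y / (1 - y * z) + 2 * (x * (y * z / (1 - y * z)) / (1 - z) * (u1 - z * u))
     + x * ((y * z / (1 - y * z)) * (y * z / (1 - y * z))) * b"

definition root_term :: "real \<Rightarrow> real \<Rightarrow> real \<Rightarrow> real" where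
  "root_term x y s = s^2 * y / (1 + s - y) + 2 * s * (y / (1 + s - y)) * (Cu x y 1 - Cu x y (1 / (1 + s)) / (1 + s))
     + s^2 * (y / (1 + s - y))^2 * Cbu x y (1 / (1 + s)) / (1 + s)"

lemma Cbu_solution:
  fixes q a b B :: real
  assumes "q \<noteq> 0" "q^2 - a \<noteq> 0" "B = a * b / q + a * ((1 / q) * (1 / q)) * B"
  shows "B = a * b * q / (q^2 - a)"
proof -
  have "B * q^2 = a * b * q + a * B" using assms(1) by (subst assms(3)) (simp add: field_simps power2_eq_square)
  then have "B * (q^2 - a) = a * b * q" by (simp add: algebra_simps)
  then show ?thesis using assms(2) by (simp add: field_simps)
qed

lemma Conv_u_solution:
  fixes q w D a b z U1 Uz :: real
  assumes "q \<noteq> 0" "w \<noteq> 0" "D \<noteq> 0"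
    and "Uz = a * b / q + a * (1 / q) / w * (U1 - z * Uz) + a * (b * z / q * (1 / q)) * (a * b * q / D)"
  shows "Uz * (w * q + a * z) = a * b * w + a * U1 + a^2 * b^2 * z * w / D"
proof -
  have "Uz * (q * w) = (a * b / q + a * (1 / q) / w * (U1 - z * Uz) + a * (b * z / q * (1 / q)) * (a * b * q / D)) * (q * w)"
    using assms(4) by simp
  also have "\<dots> = a * b * w + a * (U1 - z * Uz) + a^2 * b^2 * z * w / D"
    using assms(1-3) by (simp add: field_simps power2_eq_square)
  finally show ?thesis by (simp add: algebra_simps)
qed

text \<open>At a root of the kernel \<open>(1 - z)\<^sup>2 - x z\<^sup>2\<close> of the equation for \<open>Conv\<close> the unknown \<open>Cz\<close>
  drops out.\<close>

lemma Conv_kernel_root: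
  fixes x z Cz M C1 E :: real
  assumes "x \<noteq> 0" "z \<noteq> 1" "(1 - z)^2 = x * z^2"
    and "Cz = x * (z^2 * Cz - z * (M + C1) + M) / (1 - z)^2 + E"
  shows "z * C1 - (1 - z) * M = z^2 * E"
proof -
  have nz: "(1 - z)^2 \<noteq> 0" using assms(2) by simp
  have "Cz * (1 - z)^2 = x * (z^2 * Cz - z * (M + C1) + M) + E * (1 - z)^2"
    using nz by (subst assms(4)) (simp add: field_simps)
  then have "Cz * (x * z^2) = x * (z^2 * Cz - z * (M + C1) + M) + E * (x * z^2)"
    unfolding assms(3) .
  then have "x * (z * C1 - (1 - z) * M - z^2 * E) = 0" by (simp add: algebra_simps)
  then show ?thesis using assms(1) by simp
qed

text \<open>Both roots \<open>1 / (1 \<plusminus> \<surd>x)\<close> are of the form \<open>1 / (1 + s)\<close> with \<open>s\<^sup>2 = x\<close>.\<close>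

lemma Conv_inhom_at_root:
  fixes s y u1 u b :: real
  assumes "s \<noteq> 0" "1 + s \<noteq> 0" "1 + s - y \<noteq> 0"
  shows "1 / (1 + s) * Conv_inhom (s^2) y (1 / (1 + s)) u1 u b
    = s^2 * y / (1 + s - y) + 2 * s * (y / (1 + s - y)) * (u1 - u / (1 + s))
      + s^2 * (y / (1 + s - y))^2 * b / (1 + s)"
proof -
  define P a where "P = 1 + s" and "a = y / (1 + s - y)"
  have P: "P \<noteq> 0" using assms(2) unfolding P_def .
  have e1: "1 - 1 / P = s / P" and e2: "1 - y * (1 / P) = (1 + s - y) / P"
    using P unfolding P_def by (simp_all add: field_simps)
  have e3: "y * (1 / P) / ((1 + s - y) / P) = a"
    unfolding a_def using P by (cases "1 + s - y = 0") (simp_all add: field_simps)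
  have "1 / P * Conv_inhom (s^2) y (1 / P) u1 u b
      = 1 / P * (s^2 * y / ((1 + s - y) / P) + 2 * (s^2 * a / (s / P) * (u1 - 1 / P * u)) + s^2 * (a * a) * b)"
    unfolding Conv_inhom_def e1 e2 e3 ..
  also have "\<dots> = s^2 * y / (1 + s - y) + 2 * s * a * (u1 - u / P) + s^2 * a^2 * b / P"
    using P assms(1,3) by (simp add: field_simps power2_eq_square)
  finally show ?thesis unfolding P_def a_def .
qed

lemma kernel_elimination:
  fixes P Q p m s y u1 up um bp bm :: real
  assumes nz: "P \<noteq> 0" "Q \<noteq> 0" "p \<noteq> 0" "m \<noteq> 0"
    and eqs: "P = 1 + s - y" "Q = 1 - s - y" "p = 1 + s" "m = 1 - s"
  shows "(s^2 * y / P + 2 * s * (y / P) * (u1 - up / p) + s^2 * (y / P)^2 * bp / p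
        + (s^2 * y / Q - 2 * s * (y / Q) * (u1 - um / m) + s^2 * (y / Q)^2 * bm / m)) / 2
    = 2 * s^2 * y / (- (P * Q)) * u1 - s * y / (p * P) * up + s * y / (m * Q) * um
      + s^2 * y^2 / (2 * p * P^2) * bp + s^2 * y^2 / (2 * m * Q^2) * bm - s^2 * (1 - y) * y / (- (P * Q))"
proof -
  have "(s^2 * y / P + 2 * s * (y / P) * (u1 - up / p) + s^2 * (y / P)^2 * bp / p
        + (s^2 * y / Q - 2 * s * (y / Q) * (u1 - um / m) + s^2 * (y / Q)^2 * bm / m)) / 2
      - (2 * s^2 * y / (- (P * Q)) * u1 - s * y / (p * P) * up + s * y / (m * Q) * um
      + s^2 * y^2 / (2 * p * P^2) * bp + s^2 * y^2 / (2 * m * Q^2) * bm - s^2 * (1 - y) * y / (- (P * Q)))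
      = (s * y * (Q - P + 2 * s) * u1 + s^2 * y * (Q + P - 2 * (1 - y)) / 2) / (P * Q)"
    using nz by (simp add: field_simps power2_eq_square)
  also have "\<dots> = 0" using eqs by simp
  finally show ?thesis by simp
qed

context
  fixes x y :: real
  assumes x: "0 < x" "x < 1/100" and y: "0 < y" "y < 1/100"
begin

lemma small_xy: "0 < x" "x \<le> 1/6" "0 < y" "y \<le> 1/40"
  using x y by auto

lemma has_sum_zweight: "Y \<subseteq> Conv \<Longrightarrow> 0 \<le> z \<Longrightarrow> z \<le> 4 \<Longrightarrow> (zweight x y z has_sum infsum (zweight x y z) Y) Y"
  by (intro has_sum_infsum summable_on_dominated[OF summable_zweight_4[OF small_xy]])
    (use x y zweight_nonneg zweight_le_zweight_4 in auto)

lemma has_sum_weight: "Y \<subseteq> Conv \<Longrightarrow> (weight x y has_sum infsum (weight x y) Y) Y"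
  using has_sum_zweight[of Y 1] unfolding zweight_1 by simp

lemma has_sum_weight_first_col_size:
  "((\<lambda>L. weight x y L * real (first_col_size L)) has_sum
     infsum (\<lambda>L. weight x y L * real (first_col_size L)) Conv) Conv"
  by (intro has_sum_infsum summable_on_dominated[OF summable_zweight_4[OF small_xy]])
    (use x y weight_nonneg weight_first_col_size_le_zweight_4 in auto)

lemma Cbu_denom_nonzero:
  assumes "0 \<le> z" "z \<le> 4"
  shows "(1 - y * z)^2 - x \<noteq> 0"
proof -
  have "y * z \<le> y * 4" using assms y by (intro mult_left_mono) auto
  then have "24/25 \<le> 1 - y * z" using y by linarith
  then have "24/25 * (24/25) \<le> (1 - y * z)^2" unfolding power2_eq_square by (intro mult_mono) auto
  then show ?thesis using x by simp
qed

lemma yz_less_1: "0 \<le> z \<Longrightarrow> z \<le> 4 \<Longrightarrow> y * z < 1"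
  using mult_left_mono[of z 4 y] y by linarith

lemma infsum_zweight_Conv_bu:
  assumes "0 \<le> z" "z \<le> 4"
  shows "infsum (zweight x y z) Conv_bu = Cbu x y z"
proof -
  note yz = yz_less_1[OF assms]
  have "infsum (zweight x y z) Conv_bu
      = x * y / (1 - y * z) + x * (1 / (1 - y * z) * (1 / (1 - y * z))) * infsum (zweight x y z) Conv_bu"
    by (rule Conv_bu_equation) (use x y assms yz has_sum_zweight[of Conv_bu z] Conv_subsets in auto)
  then have "infsum (zweight x y z) Conv_bu = x * y * (1 - y * z) / ((1 - y * z)^2 - x)"
    by (rule Cbu_solution[rotated 2]) (use yz Cbu_denom_nonzero[OF assms] in auto)
  then show ?thesis unfolding Cbu_def by simp
qed

lemma Conv_u_kernel_equation:
  assumes "0 \<le> z" "z \<le> 4" "z \<noteq> 1"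
  shows "infsum (zweight x y z) Conv_u * kernel_u x y z = x * y * (1 - z) + x * infsum (weight x y) Conv_u
    + x^2 * y^2 * z * (1 - z) / ((1 - y * z)^2 - x)"
proof -
  note yz = yz_less_1[OF assms(1,2)]
  have "infsum (zweight x y z) Conv_u = x * y / (1 - y * z)
      + x * (1 / (1 - y * z)) / (1 - z) * (infsum (weight x y) Conv_u - z * infsum (zweight x y z) Conv_u)
      + x * (y * z / (1 - y * z) * (1 / (1 - y * z))) * infsum (zweight x y z) Conv_bu"
    by (rule Conv_u_equation)
      (use x y assms yz has_sum_zweight[of Conv_u z] has_sum_zweight[of Conv_bu z] has_sum_weight[of Conv_u]
        Conv_subsets in auto)
  then have "infsum (zweight x y z) Conv_u = x * y / (1 - y * z)
      + x * (1 / (1 - y * z)) / (1 - z) * (infsum (weight x y) Conv_u - z * infsum (zweight x y z) Conv_u)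
      + x * (y * z / (1 - y * z) * (1 / (1 - y * z))) * (x * y * (1 - y * z) / ((1 - y * z)^2 - x))"
    using infsum_zweight_Conv_bu[OF assms(1,2)] unfolding Cbu_def by simp
  from Conv_u_solution[OF _ _ _ this] show ?thesis
    unfolding kernel_u_def using yz assms Cbu_denom_nonzero[OF assms(1,2)] by auto
qed

lemma z0_kernel_root:
  shows "kernel_u x y (z0 x y) = 0" "0 \<le> z0 x y" "z0 x y \<le> 4" "z0 x y \<noteq> 1"
proof -
  define b where "b = 1 + y - x"
  define r where "r = sqrt (b^2 - 4 * y)"
  have b: "1/2 \<le> b" "b \<le> 2" unfolding b_def using x y by auto
  have "(1/2)^2 \<le> b^2" using b by (intro power_mono) auto
  then have D: "0 < b^2 - 4 * y" using y by (simp add: power2_eq_square)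
  have r2: "r^2 = b^2 - 4 * y" unfolding r_def using D by simp
  have r0: "0 \<le> r" unfolding r_def using D by simp
  have rb: "r < b" by (rule power2_less_imp_less) (use r2 y b in auto)
  have z: "z0 x y = (b - r) / (2 * y)" unfolding z0_def b_def r_def by simp
  have "kernel_u x y (z0 x y) = y * (z0 x y)^2 - b * z0 x y + 1"
    unfolding kernel_u_def b_def by (simp add: algebra_simps power2_eq_square)
  also have "\<dots> = ((b - r)^2 - 2 * b * (b - r) + 4 * y) / (4 * y)"
    unfolding z using y by (simp add: field_simps power2_eq_square)
  also have "(b - r)^2 - 2 * b * (b - r) + 4 * y = r^2 - b^2 + 4 * y" by (simp add: algebra_simps power2_eq_square)
  also have "\<dots> = 0" using r2 by simp
  finally show K0: "kernel_u x y (z0 x y) = 0" by simp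
  show "0 \<le> z0 x y" unfolding z using rb y by simp
  have "(b - r) * (b + r) = 4 * y" using r2 by (simp add: algebra_simps power2_eq_square)
  then have "b - r = 4 * y / (b + r)" using b r0 by (simp add: field_simps)
  also have "\<dots> \<le> 4 * y / (1/2)" using b r0 y by (intro divide_left_mono) auto
  finally show "z0 x y \<le> 4" unfolding z using y by (simp add: field_simps)
  show "z0 x y \<noteq> 1" using K0 x unfolding kernel_u_def by auto
qed

lemma x_infsum_weight_Conv_u:
  "x * infsum (weight x y) Conv_u
    = - (x * y * (1 - z0 x y)) - x^2 * y^2 * z0 x y * (1 - z0 x y) / ((1 - y * z0 x y)^2 - x)"
  using Conv_u_kernel_equation[OF z0_kernel_root(2-4)] z0_kernel_root(1) by simp

lemma infsum_weight_Conv_u: "infsum (weight x y) Conv_u = Cu x y 1"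
proof -
  have "Cu x y 1 = (x * y * (z0 x y - 1) - x^2 * y^2 * z0 x y * (1 - z0 x y) / ((1 - y * z0 x y)^2 - x)) / x"
    unfolding Cu_def by simp
  also have "\<dots> = x * infsum (weight x y) Conv_u / x" unfolding x_infsum_weight_Conv_u by (simp add: algebra_simps)
  finally show ?thesis using x by simp
qed

lemma infsum_zweight_Conv_u:
  assumes "0 \<le> z" "z \<le> 4" "z \<noteq> 1" "kernel_u x y z \<noteq> 0"
  shows "infsum (zweight x y z) Conv_u = Cu x y z"
proof -
  have "infsum (zweight x y z) Conv_u * kernel_u x y z = x * y * (z0 x y - z)
      + x^2 * y^2 * z * (1 - z) / ((1 - y * z)^2 - x)
      - x^2 * y^2 * z0 x y * (1 - z0 x y) / ((1 - y * z0 x y)^2 - x)"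
    unfolding Conv_u_kernel_equation[OF assms(1-3)] x_infsum_weight_Conv_u by (simp add: algebra_simps)
  then show ?thesis unfolding Cu_def using assms(4) unfolding kernel_u_def by (simp add: field_simps)
qed

lemma Conv_kernel_equation:
  assumes z: "0 \<le> z" "z \<le> 4" "z \<noteq> 1" "(1 - z)^2 = x * z^2" "kernel_u x y z \<noteq> 0"
  shows "z * infsum (weight x y) Conv - (1 - z) * infsum (\<lambda>L. weight x y L * real (first_col_size L)) Conv
    = z^2 * Conv_inhom x y z (Cu x y 1) (Cu x y z) (Cbu x y z)"
proof -
  define C1 M U1 where "C1 = infsum (weight x y) Conv"
    and "M = infsum (\<lambda>L. weight x y L * real (first_col_size L)) Conv"
    and "U1 = infsum (weight x y) Conv_u"
  have Uz: "infsum (zweight x y z) Conv_u = Cu x y z" by (rule infsum_zweight_Conv_u[OF z(1-3,5)])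
  have Dz: "infsum (zweight x y z) Conv_d = Cu x y z" using infsum_zweight_Conv_d Uz by simp
  have D1: "infsum (weight x y) Conv_d = U1"
    using infsum_zweight_Conv_d[of x y 1] unfolding U1_def zweight_1 .
  have Bz: "infsum (zweight x y z) Conv_bu = Cbu x y z" by (rule infsum_zweight_Conv_bu[OF z(1,2)])
  have "infsum (zweight x y z) Conv = x * y / (1 - y * z)
      + x * (z^2 * infsum (zweight x y z) Conv - z * (M + C1) + M) / (1 - z)^2
      + x * (y * z / (1 - y * z)) / (1 - z) * (infsum (weight x y) Conv_d - z * infsum (zweight x y z) Conv_d)
      + x * (y * z / (1 - y * z)) / (1 - z) * (U1 - z * infsum (zweight x y z) Conv_u)
      + x * (y * z / (1 - y * z) * (y * z / (1 - y * z))) * infsum (zweight x y z) Conv_bu"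
    unfolding M_def C1_def U1_def
    by (rule Conv_equation) (use x y z yz_less_1 Conv_subsets has_sum_zweight has_sum_weight
        has_sum_weight_first_col_size in auto)
  then have "infsum (zweight x y z) Conv = x * (z^2 * infsum (zweight x y z) Conv - z * (M + C1) + M) / (1 - z)^2
      + Conv_inhom x y z U1 (Cu x y z) (Cbu x y z)"
    unfolding D1 Dz Uz Bz Conv_inhom_def by (simp add: algebra_simps)
  then have "z * C1 - (1 - z) * M = z^2 * Conv_inhom x y z U1 (Cu x y z) (Cbu x y z)"
    by (rule Conv_kernel_root[rotated 3]) (use x z in auto)
  then show ?thesis unfolding C1_def M_def U1_def infsum_weight_Conv_u .
qed

lemma Conv_root_equation:
  assumes "s^2 = x"
  shows "infsum (weight x y) Conv - s * infsum (\<lambda>L. weight x y L * real (first_col_size L)) Conv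
    = root_term x y s"
proof -
  define z where "z = 1 / (1 + s)"
  have "\<bar>s\<bar>^2 < (1/10)^2" using assms x by (simp add: power2_eq_square)
  then have s: "\<bar>s\<bar> < 1/10" by (rule power2_less_imp_less) simp
  have s0: "s \<noteq> 0" using assms x by auto
  have z: "0 < z" "z \<le> 4" "z \<noteq> 1" "1 - z = s * z" using s s0 unfolding z_def by (auto simp: field_simps)
  have "(1 - z)^2 = x * z^2" unfolding z(4) assms[symmetric] by (simp add: power_mult_distrib)
  moreover have "kernel_u x y z = s * z * (1 + s - y * z)"
    unfolding kernel_u_def z(4) assms[symmetric] by (simp add: algebra_simps power2_eq_square)
  moreover have "y * z \<le> y * 4" using z y by (intro mult_left_mono) auto
  then have "0 < 1 + s - y * z" using s y by linarith
  ultimately have "z * infsum (weight x y) Conv - (1 - z) * infsum (\<lambda>L. weight x y L * real (first_col_size L)) Conv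
      = z^2 * Conv_inhom x y z (Cu x y 1) (Cu x y z) (Cbu x y z)"
    using s0 z by (intro Conv_kernel_equation) auto
  then have "z * (infsum (weight x y) Conv - s * infsum (\<lambda>L. weight x y L * real (first_col_size L)) Conv
      - z * Conv_inhom x y z (Cu x y 1) (Cu x y z) (Cbu x y z)) = 0"
    unfolding z(4) by (simp add: algebra_simps power2_eq_square)
  then have "infsum (weight x y) Conv - s * infsum (\<lambda>L. weight x y L * real (first_col_size L)) Conv
      = z * Conv_inhom (s^2) y z (Cu x y 1) (Cu x y z) (Cbu x y z)"
    using z(1) assms by simp
  also have "\<dots> = s^2 * y / (1 + s - y) + 2 * s * (y / (1 + s - y)) * (Cu x y 1 - Cu x y z / (1 + s))
      + s^2 * (y / (1 + s - y))^2 * Cbu x y z / (1 + s)"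
    unfolding z_def by (rule Conv_inhom_at_root) (use s s0 y in auto)
  finally show ?thesis unfolding z_def root_term_def .
qed

lemma infsum_weight_Conv_root_terms:
  "infsum (weight x y) Conv = (root_term x y (sqrt x) + root_term x y (- sqrt x)) / 2"
  using Conv_root_equation[of "sqrt x"] Conv_root_equation[of "- sqrt x"] x by simp

lemma has_sum_weight_Conv:
  "(weight x y has_sum
      (2 * x * y / (x - (1 - y)^2) * Cu x y 1
        - sqrt x * y / ((1 + sqrt x) * (1 + sqrt x - y)) * Cu x y (1 / (1 + sqrt x))
        + sqrt x * y / ((1 - sqrt x) * (1 - sqrt x - y)) * Cu x y (1 / (1 - sqrt x))
        + x * y^2 / (2 * (1 + sqrt x) * (1 + sqrt x - y)^2) * Cbu x y (1 / (1 + sqrt x))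
        + x * y^2 / (2 * (1 - sqrt x) * (1 - sqrt x - y)^2) * Cbu x y (1 / (1 - sqrt x))
        - x * (1 - y) * y / (x - (1 - y)^2))) Conv"
proof -
  define s where "s = sqrt x"
  define C1 where "C1 = infsum (weight x y) Conv"
  have s2: "s^2 = x" unfolding s_def using x by simp
  have s: "0 < s" "s < 1/10"
    using s2 x power2_less_imp_less[of s "1/10"] unfolding s_def by (auto simp: power2_eq_square)
  have minus: "root_term x y (- s) = s^2 * y / (1 - s - y)
      - 2 * s * (y / (1 - s - y)) * (Cu x y 1 - Cu x y (1 / (1 - s)) / (1 - s))
      + s^2 * (y / (1 - s - y))^2 * Cbu x y (1 / (1 - s)) / (1 - s)"
    unfolding root_term_def by simp
  have "C1 = (root_term x y s + root_term x y (- s)) / 2"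
    unfolding C1_def s_def by (rule infsum_weight_Conv_root_terms)
  also have "\<dots> = 2 * s^2 * y / (- ((1 + s - y) * (1 - s - y))) * Cu x y 1
      - s * y / ((1 + s) * (1 + s - y)) * Cu x y (1 / (1 + s))
      + s * y / ((1 - s) * (1 - s - y)) * Cu x y (1 / (1 - s))
      + s^2 * y^2 / (2 * (1 + s) * (1 + s - y)^2) * Cbu x y (1 / (1 + s))
      + s^2 * y^2 / (2 * (1 - s) * (1 - s - y)^2) * Cbu x y (1 / (1 - s))
      - s^2 * (1 - y) * y / (- ((1 + s - y) * (1 - s - y)))"
    unfolding minus unfolding root_term_def by (rule kernel_elimination) (use s y in auto)
  also have "- ((1 + s - y) * (1 - s - y)) = x - (1 - y)^2"
    unfolding s2[symmetric] by (simp add: algebra_simps power2_eq_square)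
  finally have "C1 = 2 * x * y / (x - (1 - y)^2) * Cu x y 1
      - s * y / ((1 + s) * (1 + s - y)) * Cu x y (1 / (1 + s))
      + s * y / ((1 - s) * (1 - s - y)) * Cu x y (1 / (1 - s))
      + x * y^2 / (2 * (1 + s) * (1 + s - y)^2) * Cbu x y (1 / (1 + s))
      + x * y^2 / (2 * (1 - s) * (1 - s - y)^2) * Cbu x y (1 / (1 - s))
      - x * (1 - y) * y / (x - (1 - y)^2)"
    unfolding s2 .
  then show ?thesis using has_sum_weight[of Conv] unfolding C1_def s_def by simp
qed

end

section \<open>Column lists and convex polyominoes\<close>

definition cells_of :: "column list \<Rightarrow> cell set" where
  "cells_of L = {p. 0 \<le> fst p \<and> fst p < int (length L) \<and> fst (L ! nat (fst p)) \<le> snd p \<and> snd p \<le> snd (L ! nat (fst p))}"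

definition polyomino_of :: "column list \<Rightarrow> cell set" where
  "polyomino_of L = cells_of (shift_cols (- min_bottom L) L)"

definition adj_in :: "cell set \<Rightarrow> cell \<Rightarrow> cell \<Rightarrow> bool" where
  "adj_in S a b \<longleftrightarrow> a \<in> S \<and> b \<in> S \<and> edge_adj a b"

lemma mem_cells_of: "(i, j) \<in> cells_of L \<longleftrightarrow> 0 \<le> i \<and> i < int (length L) \<and> fst (L ! nat i) \<le> j \<and> j \<le> snd (L ! nat i)"
  unfolding cells_of_def by simp

lemma mem_cells_of_nat: "(int k, j) \<in> cells_of L \<longleftrightarrow> k < length L \<and> fst (L ! k) \<le> j \<and> j \<le> snd (L ! k)"
  unfolding cells_of_def by simp

lemma column_cells_of: "k < length L \<Longrightarrow> {j. (int k, j) \<in> cells_of L} = {fst (L!k)..snd (L!k)}"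
  by (auto simp: mem_cells_of_nat)

lemma finite_cells_of: "finite (cells_of L)"
proof (rule finite_subset)
  show "cells_of L \<subseteq> {0..<int (length L)} \<times> {min_bottom L..max_top L}"
  proof
    fix p assume p: "p \<in> cells_of L"
    obtain i j where ij: "p = (i, j)" by (cases p)
    then have "0 \<le> i" "i < int (length L)" "fst (L ! nat i) \<le> j" "j \<le> snd (L ! nat i)"
      using p mem_cells_of by auto
    moreover have "L ! nat i \<in> set L" using \<open>0 \<le> i\<close> \<open>i < int (length L)\<close> by simp
    ultimately show "p \<in> {0..<int (length L)} \<times> {min_bottom L..max_top L}"
      using ij min_bottom_le[of "L ! nat i" L] max_top_ge[of "L ! nat i" L] by auto
  qed
qed simp

lemma fst_cells_of: "cols_nonempty L \<Longrightarrow> fst ` cells_of L = {0..<int (length L)}"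
proof
  assume "cols_nonempty L"
  show "{0..<int (length L)} \<subseteq> fst ` cells_of L"
  proof
    fix i assume i: "i \<in> {0..<int (length L)}"
    then have "(i, fst (L ! nat i)) \<in> cells_of L"
      using \<open>cols_nonempty L\<close> unfolding mem_cells_of cols_nonempty_def by auto
    then show "i \<in> fst ` cells_of L" by force
  qed
qed (auto simp: cells_of_def)

lemma rows_convex_cols:
  "convex_cols L \<Longrightarrow> {j. \<exists>i<length L. fst (L!i) \<le> j \<and> j \<le> snd (L!i)} = {min_bottom L..max_top L}"
proof (induction L rule: min_bottom.induct)
  case 1 then show ?case by (simp add: convex_cols_def)
next
  case (2 c) then show ?case by auto
next
  case (3 c d L)
  define L' where "L' = d # L"
  have L': "L' \<noteq> []" unfolding L'_def by simp
  have v: "convex_cols L'" "fst (hd L') \<le> snd c" "fst c \<le> snd (hd L')" "fst c \<le> snd c"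
    using convex_cols_Cons[OF L', of c] 3(2) unfolding L'_def by auto
  have IH: "{j. \<exists>i<length L'. fst (L'!i) \<le> j \<and> j \<le> snd (L'!i)} = {min_bottom L'..max_top L'}"
    using 3(1) v(1) unfolding L'_def by simp
  have split: "{j. \<exists>i<length (c # L'). fst ((c # L')!i) \<le> j \<and> j \<le> snd ((c # L')!i)}
      = {fst c..snd c} \<union> {j. \<exists>i<length L'. fst (L'!i) \<le> j \<and> j \<le> snd (L'!i)}"
  proof (intro set_eqI iffI)
    fix j assume "j \<in> {j. \<exists>i<length (c # L'). fst ((c # L')!i) \<le> j \<and> j \<le> snd ((c # L')!i)}"
    then obtain i where i: "i < length (c # L')" "fst ((c # L')!i) \<le> j" "j \<le> snd ((c # L')!i)" by auto
    show "j \<in> {fst c..snd c} \<union> {j. \<exists>i<length L'. fst (L'!i) \<le> j \<and> j \<le> snd (L'!i)}"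
      using i by (cases i) auto
  next
    fix j assume j: "j \<in> {fst c..snd c} \<union> {j. \<exists>i<length L'. fst (L'!i) \<le> j \<and> j \<le> snd (L'!i)}"
    show "j \<in> {j. \<exists>i<length (c # L'). fst ((c # L')!i) \<le> j \<and> j \<le> snd ((c # L')!i)}"
    proof (cases "j \<in> {fst c..snd c}")
      case True then show ?thesis by (auto intro!: exI[of _ 0])
    next
      case False
      then obtain i where "i < length L'" "fst (L'!i) \<le> j" "j \<le> snd (L'!i)" using j by auto
      then show ?thesis by (auto intro!: exI[of _ "Suc i"])
    qed
  qed
  have h: "min_bottom L' \<le> fst (hd L')" "snd (hd L') \<le> max_top L'"
    using min_bottom_le_hd[OF L'] max_top_ge_hd[OF L'] by auto
  have "{fst c..snd c} \<union> {min_bottom L'..max_top L'} = {min (fst c) (min_bottom L')..max (snd c) (max_top L')}"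
    using v h by (auto simp: min_def max_def)
  then show ?case using split IH unfolding L'_def[symmetric] by (simp add: min_bottom_Cons[OF L'] max_top_Cons[OF L'])
qed

lemma snd_cells_of: "convex_cols L \<Longrightarrow> snd ` cells_of L = {min_bottom L..max_top L}"
proof -
  assume v: "convex_cols L"
  have "snd ` cells_of L = {j. \<exists>i<length L. fst (L!i) \<le> j \<and> j \<le> snd (L!i)}"
  proof
    show "snd ` cells_of L \<subseteq> {j. \<exists>i<length L. fst (L!i) \<le> j \<and> j \<le> snd (L!i)}"
      by (auto simp: cells_of_def intro!: exI[of _ "nat _"])
    show "{j. \<exists>i<length L. fst (L!i) \<le> j \<and> j \<le> snd (L!i)} \<subseteq> snd ` cells_of L"
    proof
      fix j assume "j \<in> {j. \<exists>i<length L. fst (L!i) \<le> j \<and> j \<le> snd (L!i)}"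
      then obtain i where "i < length L" "fst (L!i) \<le> j" "j \<le> snd (L!i)" by auto
      then have "(int i, j) \<in> cells_of L" by (simp add: mem_cells_of_nat)
      then show "j \<in> snd ` cells_of L" by force
    qed
  qed
  then show ?thesis using rows_convex_cols[OF v] by simp
qed

lemma adj_in_sym: "(adj_in S)\<^sup>*\<^sup>* a b \<Longrightarrow> (adj_in S)\<^sup>*\<^sup>* b a"
proof -
  have "symp (adj_in S)" unfolding symp_def adj_in_def edge_adj_def by (auto simp: abs_minus_commute)
  then show "(adj_in S)\<^sup>*\<^sup>* a b \<Longrightarrow> (adj_in S)\<^sup>*\<^sup>* b a" using symp_rtranclp unfolding symp_def by blast
qed

lemma column_connected_up:
  assumes "(i, j) \<in> cells_of L" "(i, j') \<in> cells_of L" "j \<le> j'"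
  shows "(adj_in (cells_of L))\<^sup>*\<^sup>* (i, j) (i, j')"
  using assms(2,3)
proof (induction "nat (j' - j)" arbitrary: j')
  case 0 then have "j' = j" by simp
  then show ?case by simp
next
  case (Suc n)
  have "j < j'" using Suc.hyps(2) by linarith
  then have m: "(i, j' - 1) \<in> cells_of L" using Suc.prems assms(1) unfolding mem_cells_of by auto
  have "(adj_in (cells_of L))\<^sup>*\<^sup>* (i, j) (i, j' - 1)"
    using Suc.hyps(1)[of "j' - 1"] Suc.hyps(2) Suc.prems m by simp
  moreover have "adj_in (cells_of L) (i, j' - 1) (i, j')"
    using m Suc.prems unfolding adj_in_def edge_adj_def by simp
  ultimately show ?case by (rule rtranclp.rtrancl_into_rtrancl)
qed

lemma column_connected:
  assumes "(i, j) \<in> cells_of L" "(i, j') \<in> cells_of L"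
  shows "(adj_in (cells_of L))\<^sup>*\<^sup>* (i, j) (i, j')"
proof (cases "j \<le> j'")
  case True then show ?thesis using column_connected_up assms by blast
next
  case False then show ?thesis using column_connected_up[OF assms(2,1)] adj_in_sym by auto
qed

lemma cells_of_connected:
  assumes "convex_cols L"
  shows "\<forall>p\<in>cells_of L. \<forall>q\<in>cells_of L. (adj_in (cells_of L))\<^sup>*\<^sup>* p q"
proof -
  have ok: "cols_nonempty L" "cols_overlap L" "L \<noteq> []" using assms unfolding convex_cols_def by auto
  define base where "base = (0::int, fst (L ! 0))"
  have bS: "base \<in> cells_of L" unfolding base_def mem_cells_of using ok unfolding cols_nonempty_def by auto
  have claim: "\<forall>j. (int k, j) \<in> cells_of L \<longrightarrow> (adj_in (cells_of L))\<^sup>*\<^sup>* base (int k, j)" if "k < length L" for k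
    using that
  proof (induction k)
    case 0 then show ?case using column_connected bS unfolding base_def by auto
  next
    case (Suc k)
    define js where "js = max (fst (L ! k)) (fst (L ! Suc k))"
    have jk: "(int k, js) \<in> cells_of L" "(int (Suc k), js) \<in> cells_of L"
      using ok Suc.prems unfolding mem_cells_of_nat cols_nonempty_def cols_overlap_def js_def
      by (auto simp: max_def)
    have "(adj_in (cells_of L))\<^sup>*\<^sup>* base (int k, js)" using Suc jk by auto
    moreover have "adj_in (cells_of L) (int k, js) (int (Suc k), js)"
      using jk unfolding adj_in_def edge_adj_def by simp
    ultimately have "(adj_in (cells_of L))\<^sup>*\<^sup>* base (int (Suc k), js)" by (rule rtranclp.rtrancl_into_rtrancl)
    then show ?case using column_connected[OF jk(2)] by (meson rtranclp_trans)
  qed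
  have all: "(adj_in (cells_of L))\<^sup>*\<^sup>* base p" if "p \<in> cells_of L" for p
  proof -
    obtain i j where p: "p = (i, j)" by (cases p)
    have "0 \<le> i" "i < int (length L)" using that p mem_cells_of by auto
    then obtain k where "i = int k" "k < length L" by (metis nat_0_le nat_less_iff)
    then show ?thesis using claim that p by auto
  qed
  show ?thesis using all adj_in_sym by (meson rtranclp_trans)
qed

lemma cells_of_row_convex:
  assumes "convex_cols L" "(i1, j) \<in> cells_of L" "(i2, j) \<in> cells_of L" "i1 \<le> i" "i \<le> i2"
  shows "(i, j) \<in> cells_of L"
proof -
  obtain a c where ac: "i1 = int a" "i2 = int c" using assms(2,3) unfolding mem_cells_of by (metis nonneg_int_cases)
  obtain k where k: "i = int k" using assms(2,4) unfolding mem_cells_of by (metis nonneg_int_cases order_trans)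
  have a: "a < length L" "fst (L!a) \<le> j" "j \<le> snd (L!a)" using assms(2) ac mem_cells_of_nat by auto
  have c: "c < length L" "fst (L!c) \<le> j" "j \<le> snd (L!c)" using assms(3) ac mem_cells_of_nat by auto
  have akc: "a \<le> k" "k \<le> c" using assms(4,5) ac k by auto
  show ?thesis
  proof (cases "k = a \<or> k = c")
    case True then show ?thesis using assms(2,3) ac k by auto
  next
    case False
    then have lt: "a < k" "k < c" using akc by auto
    have nd: "tops_no_dip L" "bottoms_no_peak L" using assms(1) unfolding convex_cols_def by auto
    have "\<not> (snd (L!k) < snd (L!a) \<and> snd (L!k) < snd (L!c))" using nd(1) lt c(1) unfolding tops_no_dip_def by blast
    moreover have "\<not> (fst (L!a) < fst (L!k) \<and> fst (L!c) < fst (L!k))"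
      using nd(2) lt c(1) unfolding bottoms_no_peak_def by blast
    ultimately have "fst (L!k) \<le> j" "j \<le> snd (L!k)" using a c by auto
    then show ?thesis using k lt c(1) mem_cells_of_nat by auto
  qed
qed

lemma convex_polyomino_cells_of:
  assumes "convex_cols L"
  shows "convex_polyomino (cells_of L)"
  unfolding convex_polyomino_def polyomino_def
proof (intro conjI allI impI)
  show "finite (cells_of L)" by (rule finite_cells_of)
  have "(0, fst (L ! 0)) \<in> cells_of L"
    using assms unfolding mem_cells_of convex_cols_def cols_nonempty_def by auto
  then show "cells_of L \<noteq> {}" by auto
  show "\<forall>p\<in>cells_of L. \<forall>q\<in>cells_of L. (\<lambda>a b. a \<in> cells_of L \<and> b \<in> cells_of L \<and> edge_adj a b)\<^sup>*\<^sup>* p q"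
    using cells_of_connected[OF assms] unfolding adj_in_def .
next
  fix i j1 j2 j assume "(i, j1) \<in> cells_of L" "(i, j2) \<in> cells_of L" "j1 \<le> j" "j \<le> j2"
  then show "(i, j) \<in> cells_of L" unfolding mem_cells_of by auto
next
  fix j i1 i2 i assume "(i1, j) \<in> cells_of L" "(i2, j) \<in> cells_of L" "i1 \<le> i" "i \<le> i2"
  then show "(i, j) \<in> cells_of L" using cells_of_row_convex[OF assms] by blast
qed

lemma normalized_cells_of:
  assumes "convex_cols L" "min_bottom L = 0"
  shows "normalized (cells_of L)"
  unfolding normalized_def
proof (intro conjI ballI)
  fix p assume p: "p \<in> cells_of L"
  then show "0 \<le> fst p" unfolding cells_of_def by auto
  have "L ! nat (fst p) \<in> set L" using p unfolding cells_of_def by auto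
  then have "min_bottom L \<le> fst (L ! nat (fst p))" by (rule min_bottom_le)
  then show "0 \<le> snd p" using p assms(2) unfolding cells_of_def by auto
next
  have "(0, fst (L ! 0)) \<in> cells_of L"
    using assms unfolding mem_cells_of convex_cols_def cols_nonempty_def by auto
  then show "\<exists>p\<in>cells_of L. fst p = 0" by force
  have "L \<noteq> []" using assms(1) unfolding convex_cols_def by simp
  then obtain c where c: "c \<in> set L" "min_bottom L = fst c" using min_bottom_in by blast
  then obtain k where k: "k < length L" "L ! k = c" by (meson in_set_conv_nth)
  have "fst c \<le> snd c" using convex_cols_nonempty[OF assms(1) c(1)] .
  then have "(int k, fst c) \<in> cells_of L" using k by (simp add: mem_cells_of_nat)
  then show "\<exists>p\<in>cells_of L. snd p = 0" using c assms(2) by force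
qed

lemma polyomino_of_CP: "L \<in> Conv \<Longrightarrow> polyomino_of L \<in> CP"
  unfolding polyomino_of_def CP_def Conv_def anchored_def
  by (simp add: convex_polyomino_cells_of normalized_cells_of)

lemma size_polyomino_of:
  assumes "L \<in> Conv"
  shows "ncols (polyomino_of L) = length L" "nrows (polyomino_of L) = cols_height L"
proof -
  define L' where "L' = shift_cols (- min_bottom L) L"
  have v: "convex_cols L'" "L \<noteq> []" using assms unfolding L'_def Conv_def anchored_def by auto
  have P: "polyomino_of L = cells_of L'" unfolding polyomino_of_def L'_def ..
  have ne: "cols_nonempty L'" using v unfolding convex_cols_def by auto
  show "ncols (polyomino_of L) = length L" unfolding ncols_def P fst_cells_of[OF ne]
    unfolding L'_def by simp
  show "nrows (polyomino_of L) = cols_height L" unfolding nrows_def P snd_cells_of[OF v(1)]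
    using cols_height_shift_cols[OF v(2), of "- min_bottom L"] unfolding cols_height_def L'_def by simp
qed

lemma inj_on_polyomino_of: "inj_on polyomino_of Conv"
proof (rule inj_onI)
  fix L1 L2 assume L: "L1 \<in> Conv" "L2 \<in> Conv" "polyomino_of L1 = polyomino_of L2"
  have len: "length L1 = length L2" using size_polyomino_of(1)[OF L(1)] size_polyomino_of(1)[OF L(2)] L(3) by simp
  have ne: "L1 \<noteq> []" "L2 \<noteq> []" "fst (hd L1) = 0" "fst (hd L2) = 0" using L unfolding Conv_def anchored_def by auto
  have ok: "cols_nonempty L1" using L unfolding Conv_def convex_cols_def by auto
  define d1 d2 where "d1 = - min_bottom L1" and "d2 = - min_bottom L2"
  have col: "{fst (L1!k) + d1..snd (L1!k) + d1} = {fst (L2!k) + d2..snd (L2!k) + d2}" if "k < length L1" for k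
  proof -
    have "{j. (int k, j) \<in> cells_of (shift_cols d1 L1)} = {j. (int k, j) \<in> cells_of (shift_cols d2 L2)}"
      using L(3) unfolding polyomino_of_def d1_def d2_def by simp
    then show ?thesis using column_cells_of[of k "shift_cols d1 L1"] column_cells_of[of k "shift_cols d2 L2"]
        that len by simp
  qed
  have eqk: "fst (L1!k) + d1 = fst (L2!k) + d2 \<and> snd (L1!k) + d1 = snd (L2!k) + d2" if "k < length L1" for k
  proof -
    have "fst (L1!k) \<le> snd (L1!k)" using ok that unfolding cols_nonempty_def by auto
    then show ?thesis using col[OF that] by (simp add: Icc_eq_Icc)
  qed
  have "fst (L1!0) = 0" "fst (L2!0) = 0" using ne by (auto simp: hd_conv_nth)
  then have "d1 = d2" using eqk[of 0] ne by simp
  then have "L1 ! k = L2 ! k" if "k < length L1" for k using eqk[OF that] by (simp add: prod_eq_iff)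
  then show "L1 = L2" using len by (simp add: nth_equalityI)
qed

text \<open>If row \<open>j\<close> meets column \<open>a\<close> but lies above the top of a later column \<open>k\<close>, it meets
  a column between them: the last one whose top reaches \<open>j\<close>, by the overlap with its successor.\<close>

lemma overlap_row_crossing_left:
  assumes "cols_overlap L" "k < length L" "a < k" "j \<le> snd (L!a)" "snd (L!k) < j"
  shows "\<exists>a'. a \<le> a' \<and> a' < k \<and> fst (L!a') \<le> j \<and> j \<le> snd (L!a')"
  using assms(2-5)
proof (induction k)
  case 0 then show ?case by simp
next
  case (Suc k)
  show ?case
  proof (cases "j \<le> snd (L!k)")
    case True
    have "fst (L!k) \<le> snd (L!Suc k)" using assms(1) Suc.prems unfolding cols_overlap_def by auto
    then show ?thesis using True Suc.prems by (intro exI[of _ k]) auto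
  next
    case False
    then have "a < k" using Suc.prems by (metis less_Suc_eq)
    then show ?thesis using Suc.IH Suc.prems False by (metis Suc_lessD less_SucI not_le)
  qed
qed

lemma overlap_row_crossing_right:
  assumes "cols_overlap L" "c < length L" "k < c" "j \<le> snd (L!c)" "snd (L!k) < j"
  shows "\<exists>c'. k < c' \<and> c' \<le> c \<and> fst (L!c') \<le> j \<and> j \<le> snd (L!c')"
  using assms(2-5)
proof (induction c)
  case 0 then show ?case by simp
next
  case (Suc c)
  show ?case
  proof (cases "snd (L!c) < j")
    case True
    have "fst (L!Suc c) \<le> snd (L!c)" using assms(1) Suc.prems unfolding cols_overlap_def by auto
    then show ?thesis using True Suc.prems by (intro exI[of _ "Suc c"]) auto
  next
    case False
    then have "k < c" using Suc.prems by (metis less_Suc_eq not_le)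
    then show ?thesis using Suc.IH Suc.prems False by (metis Suc_lessD le_SucI not_le)
  qed
qed

lemma overlap_row_crossing_left_bottom:
  assumes "cols_overlap L" "k < length L" "a < k" "fst (L!a) \<le> j" "j < fst (L!k)"
  shows "\<exists>a'. a \<le> a' \<and> a' < k \<and> fst (L!a') \<le> j \<and> j \<le> snd (L!a')"
proof -
  obtain a' where a': "a \<le> a'" "a' < k" "fst (reflect_cols L ! a') \<le> - j" "- j \<le> snd (reflect_cols L ! a')"
    using overlap_row_crossing_left[of "reflect_cols L" k a "- j"] assms by auto
  moreover have "a' < length L" using a'(2) assms(2) by linarith
  ultimately show ?thesis by (intro exI[of _ a']) auto
qed

lemma overlap_row_crossing_right_bottom:
  assumes "cols_overlap L" "c < length L" "k < c" "fst (L!c) \<le> j" "j < fst (L!k)"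
  shows "\<exists>c'. k < c' \<and> c' \<le> c \<and> fst (L!c') \<le> j \<and> j \<le> snd (L!c')"
proof -
  obtain c' where c': "k < c'" "c' \<le> c" "fst (reflect_cols L ! c') \<le> - j" "- j \<le> snd (reflect_cols L ! c')"
    using overlap_row_crossing_right[of "reflect_cols L" c k "- j"] assms by auto
  moreover have "c' < length L" using c'(2) assms(2) by linarith
  ultimately show ?thesis by (intro exI[of _ c']) auto
qed

lemma convex_cols_if_row_convex:
  assumes "L \<noteq> []" "cols_nonempty L" "cols_overlap L"
    and row_convex: "\<And>j i1 i2 i. (i1, j) \<in> cells_of L \<Longrightarrow> (i2, j) \<in> cells_of L \<Longrightarrow> i1 \<le> i \<Longrightarrow> i \<le> i2
      \<Longrightarrow> (i, j) \<in> cells_of L"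
  shows "convex_cols L"
proof -
  have between: "fst (L!i) \<le> j \<and> j \<le> snd (L!i)"
    if "a \<le> i" "i \<le> c" "c < length L" "fst (L!a) \<le> j" "j \<le> snd (L!a)" "fst (L!c) \<le> j" "j \<le> snd (L!c)"
    for a i c j
  proof -
    have "(int a, j) \<in> cells_of L" "(int c, j) \<in> cells_of L" using that by (auto simp: mem_cells_of_nat)
    then have "(int i, j) \<in> cells_of L" using row_convex[of "int a" j "int c" "int i"] that by auto
    then show ?thesis by (simp add: mem_cells_of_nat)
  qed
  have "tops_no_dip L" unfolding tops_no_dip_def
  proof (intro allI impI notI)
    fix a i c assume h: "a < i" "i < c" "c < length L" "snd (L!i) < snd (L!a) \<and> snd (L!i) < snd (L!c)"
    define j where "j = snd (L!i) + 1"
    obtain a' where a': "a \<le> a'" "a' < i" "fst (L!a') \<le> j" "j \<le> snd (L!a')"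
      using overlap_row_crossing_left[OF assms(3), of i a j] h unfolding j_def by auto
    obtain c' where c': "i < c'" "c' \<le> c" "fst (L!c') \<le> j" "j \<le> snd (L!c')"
      using overlap_row_crossing_right[OF assms(3), of c i j] h unfolding j_def by auto
    have "j \<le> snd (L!i)" using between[of a' i c' j] a' c' h by auto
    then show False unfolding j_def by simp
  qed
  moreover have "bottoms_no_peak L" unfolding bottoms_no_peak_def
  proof (intro allI impI notI)
    fix a i c assume h: "a < i" "i < c" "c < length L" "fst (L!a) < fst (L!i) \<and> fst (L!c) < fst (L!i)"
    define j where "j = fst (L!i) - 1"
    obtain a' where a': "a \<le> a'" "a' < i" "fst (L!a') \<le> j" "j \<le> snd (L!a')"
      using overlap_row_crossing_left_bottom[OF assms(3), of i a j] h unfolding j_def by auto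
    obtain c' where c': "i < c'" "c' \<le> c" "fst (L!c') \<le> j" "j \<le> snd (L!c')"
      using overlap_row_crossing_right_bottom[OF assms(3), of c i j] h unfolding j_def by auto
    have "fst (L!i) \<le> j" using between[of a' i c' j] a' c' h by auto
    then show False unfolding j_def by simp
  qed
  ultimately show ?thesis unfolding convex_cols_def using assms by auto
qed

lemma adj_path_crosses_column:
  assumes "(adj_in S)\<^sup>*\<^sup>* p q" "fst p < i"
  shows "fst q < i \<or> (\<exists>j. (i - 1, j) \<in> S \<and> (i, j) \<in> S)"
  using assms(1)
proof (induction rule: rtranclp_induct)
  case base then show ?case using assms(2) by simp
next
  case (step q r)
  show ?case
  proof (cases "\<exists>j. (i - 1, j) \<in> S \<and> (i, j) \<in> S")
    case True then show ?thesis by simp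
  next
    case False
    then have q: "fst q < i" using step by auto
    have e: "\<bar>fst q - fst r\<bar> + \<bar>snd q - snd r\<bar> = 1" "q \<in> S" "r \<in> S"
      using step(2) unfolding adj_in_def edge_adj_def by auto
    show ?thesis
    proof (cases "fst r < i")
      case True then show ?thesis by simp
    next
      case False
      then have "fst q = i - 1" "fst r = i" "snd q = snd r" using q e by auto
      then have "(i - 1, snd q) \<in> S" "(i, snd q) \<in> S" using e by (metis prod.collapse)+
      then show ?thesis by blast
    qed
  qed
qed

context
  fixes P :: "cell set"
  assumes P: "P \<in> CP"
begin

definition last_col :: int where
  "last_col = Max (fst ` P)"

definition col_rows :: "nat \<Rightarrow> int set" where
  "col_rows k = {j. (int k, j) \<in> P}"

definition poly_cols :: "column list" where
  "poly_cols = map (\<lambda>k. (Min (col_rows k), Max (col_rows k))) [0..<Suc (nat last_col)]"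

lemma CP_D:
  shows "finite P" "P \<noteq> {}" "\<forall>p\<in>P. \<forall>q\<in>P. (adj_in P)\<^sup>*\<^sup>* p q"
    and "\<And>i j1 j2 j. (i, j1) \<in> P \<Longrightarrow> (i, j2) \<in> P \<Longrightarrow> j1 \<le> j \<Longrightarrow> j \<le> j2 \<Longrightarrow> (i, j) \<in> P"
    and "\<And>j i1 i2 i. (i1, j) \<in> P \<Longrightarrow> (i2, j) \<in> P \<Longrightarrow> i1 \<le> i \<Longrightarrow> i \<le> i2 \<Longrightarrow> (i, j) \<in> P"
    and "\<And>p. p \<in> P \<Longrightarrow> 0 \<le> fst p \<and> 0 \<le> snd p" "\<exists>p\<in>P. fst p = 0" "\<exists>p\<in>P. snd p = 0"
proof -
  have cp: "convex_polyomino P" "normalized P" using P unfolding CP_def by auto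
  then have poly: "polyomino P" unfolding convex_polyomino_def by blast
  then show "finite P" "P \<noteq> {}" unfolding polyomino_def by blast+
  show "\<forall>p\<in>P. \<forall>q\<in>P. (adj_in P)\<^sup>*\<^sup>* p q" using poly unfolding polyomino_def adj_in_def[abs_def] by blast
  show "\<And>i j1 j2 j. (i, j1) \<in> P \<Longrightarrow> (i, j2) \<in> P \<Longrightarrow> j1 \<le> j \<Longrightarrow> j \<le> j2 \<Longrightarrow> (i, j) \<in> P"
    using cp(1) unfolding convex_polyomino_def by blast
  show "\<And>j i1 i2 i. (i1, j) \<in> P \<Longrightarrow> (i2, j) \<in> P \<Longrightarrow> i1 \<le> i \<Longrightarrow> i \<le> i2 \<Longrightarrow> (i, j) \<in> P"
    using cp(1) unfolding convex_polyomino_def by blast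
  show "\<And>p. p \<in> P \<Longrightarrow> 0 \<le> fst p \<and> 0 \<le> snd p" "\<exists>p\<in>P. fst p = 0" "\<exists>p\<in>P. snd p = 0"
    using cp(2) unfolding normalized_def by auto
qed

lemma last_col_max: "\<exists>p\<in>P. fst p = last_col" "\<And>p. p \<in> P \<Longrightarrow> fst p \<le> last_col" "0 \<le> last_col"
proof -
  have fin: "finite (fst ` P)" using CP_D(1) by simp
  show "\<exists>p\<in>P. fst p = last_col" unfolding last_col_def using Max_in[OF fin] CP_D(2) by force
  show le: "fst p \<le> last_col" if "p \<in> P" for p unfolding last_col_def using fin that by simp
  show "0 \<le> last_col" using le CP_D(7) by force
qed

lemma consecutive_cols_share_row: "1 \<le> i \<Longrightarrow> i \<le> last_col \<Longrightarrow> \<exists>j. (i - 1, j) \<in> P \<and> (i, j) \<in> P"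
proof -
  assume i: "1 \<le> i" "i \<le> last_col"
  obtain p0 pN where "p0 \<in> P" "fst p0 = 0" "pN \<in> P" "fst pN = last_col"
    using CP_D(7) last_col_max(1) by blast
  then show ?thesis using adj_path_crosses_column[OF CP_D(3)[rule_format, of p0 pN], of i] i by auto
qed

lemma col_rows_nonempty: "k < Suc (nat last_col) \<Longrightarrow> col_rows k \<noteq> {}"
proof (cases k)
  case 0
  obtain p0 where "p0 \<in> P" "fst p0 = 0" using CP_D(7) by blast
  then have "(int 0, snd p0) \<in> P" by (metis prod.collapse of_nat_0)
  then show ?thesis using 0 unfolding col_rows_def by blast
next
  case (Suc k')
  assume "k < Suc (nat last_col)"
  then have "1 \<le> int k" "int k \<le> last_col" using Suc by auto
  then obtain j where "(int k, j) \<in> P" using consecutive_cols_share_row[of "int k"] by blast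
  then show ?thesis unfolding col_rows_def by auto
qed

lemma finite_col_rows: "finite (col_rows k)"
proof (rule finite_subset[of _ "snd ` P"])
  show "col_rows k \<subseteq> snd ` P" unfolding col_rows_def by force
qed (use CP_D(1) in simp)

lemma mem_col_rows_iff:
  assumes "k < Suc (nat last_col)"
  shows "(int k, j) \<in> P \<longleftrightarrow> Min (col_rows k) \<le> j \<and> j \<le> Max (col_rows k)"
proof
  assume "(int k, j) \<in> P"
  then show "Min (col_rows k) \<le> j \<and> j \<le> Max (col_rows k)" using finite_col_rows[of k] unfolding col_rows_def by auto
next
  assume h: "Min (col_rows k) \<le> j \<and> j \<le> Max (col_rows k)"
  have "Min (col_rows k) \<in> col_rows k" "Max (col_rows k) \<in> col_rows k"
    using finite_col_rows col_rows_nonempty[OF assms] by auto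
  then show "(int k, j) \<in> P" using CP_D(4) h unfolding col_rows_def by blast
qed

lemma length_poly_cols: "length poly_cols = Suc (nat last_col)"
  unfolding poly_cols_def by simp

lemma nth_poly_cols: "k < Suc (nat last_col) \<Longrightarrow> poly_cols ! k = (Min (col_rows k), Max (col_rows k))"
  unfolding poly_cols_def by (simp del: upt_Suc)

lemma cells_of_poly_cols: "cells_of poly_cols = P"
proof (intro set_eqI iffI)
  fix p assume pc: "p \<in> cells_of poly_cols"
  obtain i j where p: "p = (i, j)" by (cases p)
  have h: "0 \<le> i" "i < int (length poly_cols)" "fst (poly_cols ! nat i) \<le> j" "j \<le> snd (poly_cols ! nat i)"
    using pc unfolding p mem_cells_of by auto
  then have "nat i < length poly_cols" by (simp add: nat_less_iff)
  then have k: "nat i < Suc (nat last_col)" unfolding length_poly_cols .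
  have "(int (nat i), j) \<in> P" using mem_col_rows_iff[OF k] nth_poly_cols[OF k] h by simp
  then show "p \<in> P" using p h by simp
next
  fix p assume pP: "p \<in> P"
  obtain i j where p: "p = (i, j)" by (cases p)
  have i: "0 \<le> i" "i \<le> last_col" using CP_D(6)[OF pP] last_col_max(2)[OF pP] p by auto
  then have k: "nat i < Suc (nat last_col)" by auto
  have "(int (nat i), j) \<in> P" using pP p i by simp
  then have "Min (col_rows (nat i)) \<le> j \<and> j \<le> Max (col_rows (nat i))" using mem_col_rows_iff[OF k] by blast
  moreover have "i < int (length poly_cols)" using i(2) unfolding length_poly_cols by linarith
  ultimately show "p \<in> cells_of poly_cols" unfolding p mem_cells_of using i nth_poly_cols[OF k] by simp
qed

lemma convex_cols_poly_cols: "convex_cols poly_cols"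
proof (rule convex_cols_if_row_convex)
  show "poly_cols \<noteq> []" unfolding poly_cols_def by simp
  show "cols_nonempty poly_cols" unfolding cols_nonempty_def
  proof
    fix c assume "c \<in> set poly_cols"
    then obtain k where k0: "k < length poly_cols" "poly_cols ! k = c" by (meson in_set_conv_nth)
    then have k: "k < Suc (nat last_col)" "c = (Min (col_rows k), Max (col_rows k))"
      using nth_poly_cols unfolding length_poly_cols by auto
    have "Max (col_rows k) \<in> col_rows k" using Max_in finite_col_rows col_rows_nonempty[OF k(1)] by blast
    then show "fst c \<le> snd c" using k(2) Min_le finite_col_rows by simp
  qed
  show "cols_overlap poly_cols" unfolding cols_overlap_def length_poly_cols
  proof (intro allI impI)
    fix k assume k: "Suc k < Suc (nat last_col)"
    then have "int (Suc k) \<le> last_col" using last_col_max(3) by linarith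
    then obtain j where j: "(int (Suc k) - 1, j) \<in> P" "(int (Suc k), j) \<in> P"
      using consecutive_cols_share_row[of "int (Suc k)"] by auto
    have "(int k, j) \<in> P" using j(1) by simp
    then show "fst (poly_cols ! Suc k) \<le> snd (poly_cols ! k) \<and> fst (poly_cols ! k) \<le> snd (poly_cols ! Suc k)"
      using mem_col_rows_iff[of k j] mem_col_rows_iff[of "Suc k" j] j(2) k nth_poly_cols[of k]
        nth_poly_cols[of "Suc k"] by auto
  qed
  show "(i, j) \<in> cells_of poly_cols"
    if "(i1, j) \<in> cells_of poly_cols" "(i2, j) \<in> cells_of poly_cols" "i1 \<le> i" "i \<le> i2" for i1 i2 i j
    using that CP_D(5) unfolding cells_of_poly_cols by blast
qed

lemma min_bottom_poly_cols: "min_bottom poly_cols = 0"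
proof -
  have rows: "snd ` P = {min_bottom poly_cols..max_top poly_cols}"
    using snd_cells_of[OF convex_cols_poly_cols] cells_of_poly_cols by simp
  have "0 \<in> snd ` P" using CP_D(8) by force
  then have "min_bottom poly_cols \<le> 0" "min_bottom poly_cols \<in> snd ` P" using rows by auto
  then show ?thesis using CP_D(6) by force
qed

end

lemma CP_eq_image_polyomino_of: "CP = polyomino_of ` Conv"
proof
  show "polyomino_of ` Conv \<subseteq> CP" using polyomino_of_CP by blast
  show "CP \<subseteq> polyomino_of ` Conv"
  proof
    fix P assume P: "P \<in> CP"
    define L0 where "L0 = poly_cols P"
    have L0: "convex_cols L0" "L0 \<noteq> []" "min_bottom L0 = 0" "cells_of L0 = P"
      unfolding L0_def using convex_cols_poly_cols[OF P] min_bottom_poly_cols[OF P] cells_of_poly_cols[OF P]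
      by (auto simp: convex_cols_def)
    define L where "L = shift_cols (- fst (hd L0)) L0"
    have "L \<in> Conv" unfolding Conv_def anchored_def L_def using L0 by (simp add: hd_shift_cols)
    moreover have "polyomino_of L = P"
      unfolding polyomino_of_def L_def using L0 by simp
    ultimately show "P \<in> polyomino_of ` Conv" by blast
  qed
qed

lemma has_sum_CP_iff_Conv:
  "((\<lambda>P. x ^ ncols P * y ^ nrows P) has_sum S) CP \<longleftrightarrow> (weight x y has_sum S) Conv"
proof -
  have "((\<lambda>P. x ^ ncols P * y ^ nrows P) has_sum S) (polyomino_of ` Conv)
      \<longleftrightarrow> (((\<lambda>P. x ^ ncols P * y ^ nrows P) \<circ> polyomino_of) has_sum S) Conv"
    by (rule has_sum_reindex[OF inj_on_polyomino_of])
  also have "\<dots> \<longleftrightarrow> (weight x y has_sum S) Conv"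
    by (rule has_sum_cong) (simp add: size_polyomino_of weight_def)
  finally show ?thesis unfolding CP_eq_image_polyomino_of .
qed

theorem theorem3p3:
  "\<exists>\<epsilon>>0. \<forall>x y :: real. 0 < x \<and> x < \<epsilon> \<and> 0 < y \<and> y < \<epsilon> \<longrightarrow>
     (let zp = 1 / (1 + sqrt x); zm = 1 / (1 - sqrt x) in
      ((\<lambda>P. x ^ ncols P * y ^ nrows P) has_sum
         (2 * x * y / (x - (1 - y)^2) * Cu x y 1
          - sqrt x * y / ((1 + sqrt x) * (1 + sqrt x - y)) * Cu x y zp
          + sqrt x * y / ((1 - sqrt x) * (1 - sqrt x - y)) * Cu x y zm
          + x * y^2 / (2 * (1 + sqrt x) * (1 + sqrt x - y)^2) * Cbu x y zp
          + x * y^2 / (2 * (1 - sqrt x) * (1 - sqrt x - y)^2) * Cbu x y zm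
          - x * (1 - y) * y / (x - (1 - y)^2))) CP)"
proof (intro exI[of _ "1/100"] conjI allI impI)
  fix x y :: real
  assume "0 < x \<and> x < 1/100 \<and> 0 < y \<and> y < 1/100"
  then show "let zp = 1 / (1 + sqrt x); zm = 1 / (1 - sqrt x) in
      ((\<lambda>P. x ^ ncols P * y ^ nrows P) has_sum
         (2 * x * y / (x - (1 - y)^2) * Cu x y 1
          - sqrt x * y / ((1 + sqrt x) * (1 + sqrt x - y)) * Cu x y zp
          + sqrt x * y / ((1 - sqrt x) * (1 - sqrt x - y)) * Cu x y zm
          + x * y^2 / (2 * (1 + sqrt x) * (1 + sqrt x - y)^2) * Cbu x y zp
          + x * y^2 / (2 * (1 - sqrt x) * (1 - sqrt x - y)^2) * Cbu x y zm
          - x * (1 - y) * y / (x - (1 - y)^2))) CP"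
    unfolding Let_def has_sum_CP_iff_Conv by (intro has_sum_weight_Conv) auto
qed simp

end
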